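(* For every $\mu\in\mathbb{P}_{\textup{cost}}^{\textup{AC}}(\mathcal{X})$ and every bounded continuous $\phi:\mathcal{Y}\to\mathbb{R}$, $$\inf_{\nu\in\mathbb{P}_{\textup{cost}}(\mathcal{Y})}\Big(\int_{\mathcal{Y}}\phi\,\mathrm{d}\nu+K_c(\mu,\nu)\Big)=\int_{\mathcal{X}}(-\phi)^c\,\mathrm{d}\mu,$$ where $(-\phi)^c(x)=\inf_{y\in\mathcal{Y}}(c(x,y)+\phi(y))$. Moreover the infimum is attained at $\bar\nu=(T_{(-\phi)^c})_\#\mu$.
   Context: Standing assumptions. $\mathcal{X},\mathcal{Y}\subset\mathbb{R}^d$ are open sets and $c:\mathcal{X}\times\mathcal{Y}\to[0,\infty)$ satisfies: (A1) $c\in C^2(\mathcal{X}\times\mathcal{Y})$ and $c$ is bi-twisted, i.e. $y\mapsto\nabla_x c(x,y)$ and $x\mapsto\nabla_y c(x,y)$ are injective; (A2) for every $b\in\mathbb{R}$ and $(x',y')\in\mathcal{X}\times\mathcal{Y}$ the sets $\{x\in\mathcal{X}:c(x,y')\le b\}$ and $\{y\in\mathcal{Y}:c(x',y)\le b\}$ are compact; (A3) there is a point $(x_0,y_0)\in\mathcal{X}\times\mathcal{Y}$ such that for every $\varepsilon>0$ there is $B_\varepsilon>0$ with $(1-\varepsilon)c(x_0,y)-B_\varepsilon c(x,y_0)\le c(x,y)\le(1+\varepsilon)c(x_0,y)+B_\varepsilon c(x,y_0)$ and $(1-\varepsilon)c(x,y_0)-B_\varepsilon c(x_0,y)\le c(x,y)\le(1+\varepsilon)c(x,y_0)+B_\varepsilon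 c(x_0,y)$ for all $(x,y)\in\mathcal{X}\times\mathcal{Y}$. Define $\mathbb{P}_{\textup{cost}}(\mathcal{X})=\{\mu\in\mathcal{P}(\mathcal{X}):\int c(x,y_0)\,\mathrm{d}\mu(x)<\infty\}$ and $\mathbb{P}_{\textup{cost}}(\mathcal{Y})=\{\nu\in\mathcal{P}(\mathcal{Y}):\int c(x_0,y)\,\mathrm{d}\nu(y)<\infty\}$; a superscript AC denotes the subset of measures absolutely continuous w.r.t. Lebesgue measure. $K_c(\mu,\nu)=\inf_{\pi\in\Pi(\mu,\nu)}\int c\,\mathrm{d}\pi$. For $f:\mathcal{Y}\to\mathbb{R}$, $f^c(x)=\inf_{y}(c(x,y)-f(y))$; for $g:\mathcal{X}\to\mathbb{R}$, $g^c(y)=\inf_x(c(x,y)-g(x))$; a function is $c$-concave if it equals its double $c$-transform. For a $c$-concave $g:\mathcal{X}\to\mathbb{R}$, $T_g$ denotes the map defined at points $x$ of differentiability of $g$ (hence a.e.) by $\nabla_xc(x,T_g(x))=\nabla g(x)$, which is well defined by the twist condition. *)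

theory Defs
  imports "HOL-Analysis.Analysis" "HOL-Probability.Probability"
begin

definition C2_on :: "'b::euclidean_space set \<Rightarrow> ('b \<Rightarrow> real) \<Rightarrow> bool" where
  "C2_on S f \<longleftrightarrow> (\<exists>(D :: 'b \<Rightarrow> ('b \<Rightarrow>\<^sub>L real)) (D2 :: 'b \<Rightarrow> ('b \<Rightarrow>\<^sub>L ('b \<Rightarrow>\<^sub>L real))).
      (\<forall>p\<in>S. (f has_derivative blinfun_apply (D p)) (at p)) \<and>
      (\<forall>p\<in>S. (D has_derivative blinfun_apply (D2 p)) (at p)) \<and>
      continuous_on S D2)"

text \<open>Gradients are represented by Frechet derivatives (linear functionals).\<close>
definition grad_x :: "('a::euclidean_space \<Rightarrow> 'a \<Rightarrow> real) \<Rightarrow> 'a \<Rightarrow> 'a \<Rightarrow> ('a \<Rightarrow> real)" where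
  "grad_x c x y = frechet_derivative (\<lambda>x'. c x' y) (at x)"

definition grad_y :: "('a::euclidean_space \<Rightarrow> 'a \<Rightarrow> real) \<Rightarrow> 'a \<Rightarrow> 'a \<Rightarrow> ('a \<Rightarrow> real)" where
  "grad_y c x y = frechet_derivative (\<lambda>y'. c x y') (at y)"

definition cost_assms :: "'a::euclidean_space set \<Rightarrow> 'a set \<Rightarrow> ('a \<Rightarrow> 'a \<Rightarrow> real) \<Rightarrow> 'a \<Rightarrow> 'a \<Rightarrow> bool" where
  "cost_assms X Y c x0 y0 \<longleftrightarrow>
     open X \<and> open Y \<and>
     (\<forall>x\<in>X. \<forall>y\<in>Y. 0 \<le> c x y) \<and>
     C2_on (X \<times> Y) (\<lambda>(x,y). c x y) \<and>
     (\<forall>x\<in>X. inj_on (grad_x c x) Y) \<and>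
     (\<forall>y\<in>Y. inj_on (\<lambda>x. grad_y c x y) X) \<and>
     (\<forall>b::real. \<forall>x'\<in>X. \<forall>y'\<in>Y. compact {x\<in>X. c x y' \<le> b} \<and> compact {y\<in>Y. c x' y \<le> b}) \<and>
     x0 \<in> X \<and> y0 \<in> Y \<and>
     (\<forall>\<epsilon>>0. \<exists>B>0. \<forall>x\<in>X. \<forall>y\<in>Y.
        (1 - \<epsilon>) * c x0 y - B * c x y0 \<le> c x y \<and> c x y \<le> (1 + \<epsilon>) * c x0 y + B * c x y0 \<and>
        (1 - \<epsilon>) * c x y0 - B * c x0 y \<le> c x y \<and> c x y \<le> (1 + \<epsilon>) * c x y0 + B * c x0 y)"

text \<open>Borel probability measures on the ambient space concentrated on S.\<close>
definition prob_on :: "'a::euclidean_space set \<Rightarrow> 'a measure \<Rightarrow> bool" where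
  "prob_on S M \<longleftrightarrow> prob_space M \<and> sets M = sets borel \<and> emeasure M (space M - S) = 0"

definition Pcost_X :: "'a::euclidean_space set \<Rightarrow> ('a \<Rightarrow> 'a \<Rightarrow> real) \<Rightarrow> 'a \<Rightarrow> 'a measure set" where
  "Pcost_X X c y0 = {\<mu>. prob_on X \<mu> \<and> set_integrable \<mu> X (\<lambda>x. c x y0)}"

definition Pcost_Y :: "'a::euclidean_space set \<Rightarrow> ('a \<Rightarrow> 'a \<Rightarrow> real) \<Rightarrow> 'a \<Rightarrow> 'a measure set" where
  "Pcost_Y Y c x0 = {\<nu>. prob_on Y \<nu> \<and> set_integrable \<nu> Y (\<lambda>y. c x0 y)}"

definition Pcost_AC_X :: "'a::euclidean_space set \<Rightarrow> ('a \<Rightarrow> 'a \<Rightarrow> real) \<Rightarrow> 'a \<Rightarrow> 'a measure set" where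
  "Pcost_AC_X X c y0 = {\<mu>\<in>Pcost_X X c y0. absolutely_continuous lborel \<mu>}"

definition couplings :: "'a::euclidean_space measure \<Rightarrow> 'a measure \<Rightarrow> ('a \<times> 'a) measure set" where
  "couplings \<mu> \<nu> = {\<pi>. prob_space \<pi> \<and> sets \<pi> = sets (borel :: ('a \<times> 'a) measure) \<and>
       distr \<pi> borel fst = \<mu> \<and> distr \<pi> borel snd = \<nu>}"

definition Kc :: "'a::euclidean_space set \<Rightarrow> 'a set \<Rightarrow> ('a \<Rightarrow> 'a \<Rightarrow> real) \<Rightarrow> 'a measure \<Rightarrow> 'a measure \<Rightarrow> ennreal" where
  "Kc X Y c \<mu> \<nu> = (INF \<pi>\<in>couplings \<mu> \<nu>. \<integral>\<^sup>+ p. indicator (X \<times> Y) p * ennreal (c (fst p) (snd p)) \<partial>\<pi>)"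

definition ctrans_Y :: "'a set \<Rightarrow> ('a \<Rightarrow> 'a \<Rightarrow> real) \<Rightarrow> ('a \<Rightarrow> real) \<Rightarrow> 'a \<Rightarrow> real" where
  "ctrans_Y Y c f x = (INF y\<in>Y. c x y - f y)"

definition Tmap :: "'a::euclidean_space set \<Rightarrow> ('a \<Rightarrow> 'a \<Rightarrow> real) \<Rightarrow> ('a \<Rightarrow> real) \<Rightarrow> 'a \<Rightarrow> 'a" where
  "Tmap Y c g x = (THE y. y \<in> Y \<and> grad_x c x y = frechet_derivative g (at x))"

end

(* The c-transform psi = (-phi)^c is the pointwise infimum of the functions c(., y) + phi(y).
   By the growth condition (A3) only y in a compact set matter near a given point, and there the
   C^2 bound on c makes these functions uniformly semiconcave: locally, psi is a convex function
   minus L |x|^2. A convex function has countably many kinks on every line, so by Fubini it is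
   differentiable Lebesgue-a.e.; hence psi is differentiable mu-a.e. At such a point x every
   minimiser y of c(x, .) + phi satisfies grad_x c(x, y) = grad psi(x), so by the twist condition
   it is T(x); comparing with a countable dense set of competitors shows that T is Borel.
   Integrating psi(x) <= c(x, y) + phi(y) against any coupling gives
   int psi d mu <= int phi d nu + K_c(mu, nu), and along the coupling (id, T)_# mu this inequality
   is an equality, so nu = T_# mu attains the infimum. *)

theory Submission
  imports Defs
begin

section \<open>Convex functions are differentiable almost everywhere\<close>

lemma null_sets_lborel_if_countable_lines:
  fixes A :: "'a::euclidean_space set" and b :: 'a
  assumes A: "A \<in> sets borel" and lines: "\<And>x. countable {t::real. x + t *\<^sub>R b \<in> A}"
  shows "A \<in> null_sets lborel"
proof -
  \<comment> \<open>Fubini for the indicator of \<open>x + t b \<in> A\<close> over \<open>x\<close> and \<open>t \<in> [0,1]\<close>: the \<open>x\<close>-sections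
      are countable, the \<open>t\<close>-sections are translates of \<open>A\<close>.\<close>
  define F where "F = (\<lambda>(x::'a) (t::real). indicator {0..1} t * indicator A (x + t *\<^sub>R b) :: ennreal)"
  have F_meas: "case_prod F \<in> borel_measurable (lborel \<Otimes>\<^sub>M lborel)"
    unfolding F_def using A[measurable] by measurable
  have "(\<integral>\<^sup>+ t. F x t \<partial>lborel) = 0" for x
  proof -
    have "AE t in lborel. t \<notin> {t::real. x + t *\<^sub>R b \<in> A}"
      by (intro AE_not_in countable_imp_null_set_lborel lines)
    then show ?thesis unfolding F_def
      by (subst nn_integral_0_iff_AE) (use A in \<open>auto elim!: AE_mp\<close>)
  qed
  moreover have "(\<integral>\<^sup>+ x. F x t \<partial>lborel) = indicator {0..1} t * emeasure lborel A" for t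
  proof -
    have "(\<integral>\<^sup>+ x. indicator A (x + t *\<^sub>R b) \<partial>lborel)
        = (\<integral>\<^sup>+ x. indicator A x \<partial>distr lborel borel ((+) (t *\<^sub>R b)))"
      using A by (subst nn_integral_distr) (auto simp: add.commute)
    also have "\<dots> = emeasure lborel A" using A by (simp add: lborel_distr_plus)
    finally show ?thesis unfolding F_def
      by (subst nn_integral_cmult) (use A in auto)
  qed
  moreover have "pair_sigma_finite (lborel::'a measure) (lborel::real measure)"
    by (intro pair_sigma_finite.intro lborel.sigma_finite_measure_axioms)
  ultimately have "emeasure lborel A = 0"
    using pair_sigma_finite.Fubini'[OF _ F_meas] by (simp add: nn_integral_multc)
  then show ?thesis using A by auto
qed

lemma convex_on_slope_mono:
  fixes \<psi> :: "real \<Rightarrow> real"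
  assumes cv: "convex_on J \<psi>" and J: "t \<in> J" "t + h1 \<in> J" "t + h2 \<in> J"
    and h: "h1 \<noteq> 0" "h2 \<noteq> 0" "h1 < h2"
  shows "(\<psi> (t + h1) - \<psi> t) / h1 \<le> (\<psi> (t + h2) - \<psi> t) / h2"
proof -
  consider "h2 < 0" | "h1 < 0" "0 < h2" | "0 < h1" using h by linarith
  then show ?thesis
  proof cases
    case 1
    have "(\<psi> (t + h1) - \<psi> t) / ((t + h1) - t) \<le> (\<psi> (t + h2) - \<psi> t) / ((t + h2) - t)"
      using convex_on_slope_le(2)[OF cv J(2) J(1), of "t + h2"] 1 h by auto
    then show ?thesis by simp
  next
    case 2
    have "(\<psi> (t + h1) - \<psi> t) / ((t + h1) - t) \<le> (\<psi> (t + h1) - \<psi> (t + h2)) / ((t + h1) - (t + h2))"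
      using convex_on_slope_le(1)[OF cv J(2) J(3), of t] 2 by auto
    also have "\<dots> \<le> (\<psi> t - \<psi> (t + h2)) / (t - (t + h2))"
      using convex_on_slope_le(2)[OF cv J(2) J(3), of t] 2 by auto
    finally show ?thesis
      by (metis add_diff_cancel_left' minus_diff_eq minus_divide_divide)
  next
    case 3
    have "(\<psi> t - \<psi> (t + h1)) / (t - (t + h1)) \<le> (\<psi> t - \<psi> (t + h2)) / (t - (t + h2))"
      using convex_on_slope_le(1)[OF cv J(1) J(3), of "t + h1"] 3 h by auto
    then show ?thesis
      by (metis add_diff_cancel_left' minus_diff_eq minus_divide_divide)
  qed
qed

definition right_deriv :: "(real \<Rightarrow> real) \<Rightarrow> real set \<Rightarrow> real \<Rightarrow> real" where
  "right_deriv \<psi> J t = (INF h\<in>{h. 0 < h \<and> t + h \<in> J}. (\<psi> (t + h) - \<psi> t) / h)"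

definition left_deriv :: "(real \<Rightarrow> real) \<Rightarrow> real set \<Rightarrow> real \<Rightarrow> real" where
  "left_deriv \<psi> J t = (SUP h\<in>{h. h < 0 \<and> t + h \<in> J}. (\<psi> (t + h) - \<psi> t) / h)"

context
  fixes \<psi> :: "real \<Rightarrow> real" and J :: "real set" and t :: real
  assumes cv: "convex_on J \<psi>" and oJ: "open J" and tJ: "t \<in> J"
begin

private lemma small_steps_in:
  obtains e where "e > 0" "\<And>h. \<bar>h\<bar> < e \<Longrightarrow> t + h \<in> J"
proof -
  obtain e where "e > 0" "ball t e \<subseteq> J" using oJ tJ openE by blast
  then show ?thesis using that[of e] by (auto simp: dist_real_def subset_iff)
qed

private lemma right_steps_nonempty: "{h. 0 < h \<and> t + h \<in> J} \<noteq> {}"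
proof -
  obtain e where "e > 0" "\<And>h. \<bar>h\<bar> < e \<Longrightarrow> t + h \<in> J" using small_steps_in by blast
  then have "e/2 \<in> {h. 0 < h \<and> t + h \<in> J}" by auto
  then show ?thesis by blast
qed

private lemma left_steps_nonempty: "{h. h < 0 \<and> t + h \<in> J} \<noteq> {}"
proof -
  obtain e where e: "e > 0" "\<And>h. \<bar>h\<bar> < e \<Longrightarrow> t + h \<in> J" using small_steps_in by blast
  then have "-e/2 \<in> {h. h < 0 \<and> t + h \<in> J}" using e(2)[of "-e/2"] by auto
  then show ?thesis by blast
qed

private lemma bdd_below_right_slopes:
  "bdd_below ((\<lambda>h. (\<psi> (t + h) - \<psi> t) / h) ` {h. 0 < h \<and> t + h \<in> J})"
proof -
  obtain h' where "h' < 0" "t + h' \<in> J" using left_steps_nonempty by blast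
  then show ?thesis
    by (intro bdd_belowI[of _ "(\<psi> (t + h') - \<psi> t) / h'"]) (auto intro!: convex_on_slope_mono[OF cv tJ])
qed

private lemma bdd_above_left_slopes:
  "bdd_above ((\<lambda>h. (\<psi> (t + h) - \<psi> t) / h) ` {h. h < 0 \<and> t + h \<in> J})"
proof -
  obtain h' where "0 < h'" "t + h' \<in> J" using right_steps_nonempty by blast
  then show ?thesis
    by (intro bdd_aboveI[of _ "(\<psi> (t + h') - \<psi> t) / h'"]) (auto intro!: convex_on_slope_mono[OF cv tJ])
qed

lemma slope_le_left_deriv: "h < 0 \<Longrightarrow> t + h \<in> J \<Longrightarrow> (\<psi> (t + h) - \<psi> t) / h \<le> left_deriv \<psi> J t"
  unfolding left_deriv_def by (rule cSUP_upper[OF _ bdd_above_left_slopes]) auto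

lemma right_deriv_le_slope: "0 < h \<Longrightarrow> t + h \<in> J \<Longrightarrow> right_deriv \<psi> J t \<le> (\<psi> (t + h) - \<psi> t) / h"
  unfolding right_deriv_def by (rule cINF_lower[OF bdd_below_right_slopes]) auto

lemma left_deriv_le_right_deriv: "left_deriv \<psi> J t \<le> right_deriv \<psi> J t"
  unfolding left_deriv_def right_deriv_def
  using left_steps_nonempty right_steps_nonempty
  by (intro cSUP_least cINF_greatest) (auto intro!: convex_on_slope_mono[OF cv tJ])

lemma right_deriv_tendsto: "((\<lambda>h. (\<psi> (t + h) - \<psi> t) / h) \<longlongrightarrow> right_deriv \<psi> J t) (at_right 0)"
proof (rule tendstoI)
  fix \<epsilon> :: real assume "\<epsilon> > 0"
  obtain e where e: "e > 0" "\<And>h. \<bar>h\<bar> < e \<Longrightarrow> t + h \<in> J" using small_steps_in by blast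
  obtain h0 where h0: "0 < h0" "t + h0 \<in> J" "(\<psi> (t + h0) - \<psi> t) / h0 < right_deriv \<psi> J t + \<epsilon>"
    using cINF_less_iff[OF right_steps_nonempty bdd_below_right_slopes, of "right_deriv \<psi> J t + \<epsilon>"] \<open>\<epsilon> > 0\<close>
    unfolding right_deriv_def by auto
  have "eventually (\<lambda>h. 0 < h \<and> h < min e h0) (at_right (0::real))"
    using e h0 by (simp add: eventually_at_right_field) (metis min_less_iff_conj)
  then show "eventually (\<lambda>h. dist ((\<psi> (t + h) - \<psi> t) / h) (right_deriv \<psi> J t) < \<epsilon>) (at_right 0)"
  proof eventually_elim
    case (elim h)
    then have "t + h \<in> J" using e by auto
    then have "right_deriv \<psi> J t \<le> (\<psi> (t + h) - \<psi> t) / h"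
      and "(\<psi> (t + h) - \<psi> t) / h \<le> (\<psi> (t + h0) - \<psi> t) / h0"
      using elim right_deriv_le_slope convex_on_slope_mono[OF cv tJ _ h0(2)] by auto
    then show ?case using h0 by (simp add: dist_real_def)
  qed
qed

lemma left_deriv_tendsto: "((\<lambda>h. (\<psi> (t + h) - \<psi> t) / h) \<longlongrightarrow> left_deriv \<psi> J t) (at_left 0)"
proof (rule tendstoI)
  fix \<epsilon> :: real assume "\<epsilon> > 0"
  obtain e where e: "e > 0" "\<And>h. \<bar>h\<bar> < e \<Longrightarrow> t + h \<in> J" using small_steps_in by blast
  obtain h0 where h0: "h0 < 0" "t + h0 \<in> J" "left_deriv \<psi> J t - \<epsilon> < (\<psi> (t + h0) - \<psi> t) / h0"
    using less_cSUP_iff[OF left_steps_nonempty bdd_above_left_slopes, of "left_deriv \<psi> J t - \<epsilon>"]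
      \<open>\<epsilon> > 0\<close>
    unfolding left_deriv_def by auto
  have "eventually (\<lambda>h. h < 0 \<and> max (-e) h0 < h) (at_left (0::real))"
    using e h0 by (simp add: eventually_at_left_field) (metis max_less_iff_conj neg_less_0_iff_less)
  then show "eventually (\<lambda>h. dist ((\<psi> (t + h) - \<psi> t) / h) (left_deriv \<psi> J t) < \<epsilon>) (at_left 0)"
  proof eventually_elim
    case (elim h)
    then have "t + h \<in> J" using e by auto
    then have "(\<psi> (t + h) - \<psi> t) / h \<le> left_deriv \<psi> J t"
      and "(\<psi> (t + h0) - \<psi> t) / h0 \<le> (\<psi> (t + h) - \<psi> t) / h"
      using elim slope_le_left_deriv convex_on_slope_mono[OF cv tJ h0(2)] h0 by auto
    then show ?case using h0 by (simp add: dist_real_def)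
  qed
qed

lemma has_real_derivative_if_left_deriv_eq_right_deriv:
  "left_deriv \<psi> J t = right_deriv \<psi> J t \<Longrightarrow> (\<psi> has_real_derivative right_deriv \<psi> J t) (at t)"
  unfolding DERIV_def using left_deriv_tendsto right_deriv_tendsto by (simp add: filterlim_at_split)

end

lemma right_deriv_le_left_deriv:
  fixes \<psi> :: "real \<Rightarrow> real"
  assumes cv: "convex_on J \<psi>" and oJ: "open J" and J: "t1 \<in> J" "t2 \<in> J" "t1 < t2"
  shows "right_deriv \<psi> J t1 \<le> left_deriv \<psi> J t2"
proof -
  have "right_deriv \<psi> J t1 \<le> (\<psi> (t1 + (t2 - t1)) - \<psi> t1) / (t2 - t1)"
    using J by (intro right_deriv_le_slope[OF cv oJ]) auto
  also have "\<dots> = (\<psi> (t2 + (t1 - t2)) - \<psi> t2) / (t1 - t2)"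
    by (simp add: divide_simps) (simp add: algebra_simps)
  also have "\<dots> \<le> left_deriv \<psi> J t2"
    using J by (intro slope_le_left_deriv[OF cv oJ]) auto
  finally show ?thesis .
qed

lemma countable_left_deriv_neq_right_deriv:
  fixes \<psi> :: "real \<Rightarrow> real"
  assumes cv: "convex_on J \<psi>" and oJ: "open J"
  shows "countable {t\<in>J. left_deriv \<psi> J t \<noteq> right_deriv \<psi> J t}"
proof -
  let ?S = "{t\<in>J. left_deriv \<psi> J t \<noteq> right_deriv \<psi> J t}"
  \<comment> \<open>The open intervals \<open>(left_deriv t, right_deriv t)\<close>, \<open>t \<in> ?S\<close>, are disjoint; pick a rational in each.\<close>
  have "\<exists>q\<in>\<rat>. left_deriv \<psi> J t < q \<and> q < right_deriv \<psi> J t" if "t \<in> ?S" for t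
    using that left_deriv_le_right_deriv[OF cv oJ] Rats_dense_in_real[of "left_deriv \<psi> J t"]
    by (metis (mono_tags, lifting) mem_Collect_eq order_le_less)
  then obtain q where q: "\<And>t. t \<in> ?S \<Longrightarrow> q t \<in> \<rat> \<and> left_deriv \<psi> J t < q t \<and> q t < right_deriv \<psi> J t"
    by metis
  have "inj_on q ?S"
  proof (rule inj_onI, rule ccontr)
    fix s t assume st: "s \<in> ?S" "t \<in> ?S" "q s = q t" "s \<noteq> t"
    then consider "s < t" | "t < s" by linarith
    then show False
      using right_deriv_le_left_deriv[OF cv oJ, of s t] right_deriv_le_left_deriv[OF cv oJ, of t s]
        q[OF st(1)] q[OF st(2)] st by cases auto
  qed
  moreover have "q ` ?S \<subseteq> \<rat>" using q by auto
  ultimately show ?thesis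
    using countable_rat by (metis countable_image_inj_on countable_subset)
qed

lemma has_real_derivative_first_order_bound:
  assumes "(g has_real_derivative d) (at t)" and "e > 0"
  shows "\<exists>\<delta>>0. \<forall>s. \<bar>s\<bar> < \<delta> \<longrightarrow> \<bar>g (t + s) - g t - s * d\<bar> \<le> e * \<bar>s\<bar>"
proof -
  have "(g has_derivative (*) d) (at t)"
    using assms(1) unfolding has_field_derivative_def .
  then obtain \<delta> where \<delta>: "\<delta> > 0"
    "\<And>y. norm (y - t) < \<delta> \<Longrightarrow> norm (g y - g t - d * (y - t)) \<le> e * norm (y - t)"
    using assms(2) unfolding has_derivative_at_alt by blast
  have "\<bar>g (t + s) - g t - s * d\<bar> \<le> e * \<bar>s\<bar>" if "\<bar>s\<bar> < \<delta>" for s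
    using \<delta>(2)[of "t + s"] that by (simp add: mult.commute)
  then show ?thesis using \<delta>(1) by blast
qed

lemma convex_on_le_basis_average:
  fixes G :: "'a::euclidean_space \<Rightarrow> real"
  assumes cv: "convex_on U G" and U: "\<And>b. b \<in> Basis \<Longrightarrow> x + (real DIM('a) * (h \<bullet> b)) *\<^sub>R b \<in> U"
  shows "G (x + h) \<le> (\<Sum>b\<in>Basis. G (x + (real DIM('a) * (h \<bullet> b)) *\<^sub>R b) / real DIM('a))"
proof -
  define n where "n = real DIM('a)"
  have n: "n \<ge> 1" unfolding n_def using DIM_positive by (simp add: Suc_le_eq)
  have "(\<Sum>b\<in>Basis. (1/n) *\<^sub>R (x + (n * (h \<bullet> b)) *\<^sub>R b)) = (\<Sum>b\<in>(Basis::'a set). (1/n) *\<^sub>R x + (h \<bullet> b) *\<^sub>R b)"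
    using n by (intro sum.cong) (simp_all add: scaleR_add_right)
  also have "\<dots> = x + h"
    using n by (simp add: sum.distrib euclidean_representation n_def scaleR_sum_left[symmetric])
  finally have bary: "(\<Sum>b\<in>Basis. (1/n) *\<^sub>R (x + (n * (h \<bullet> b)) *\<^sub>R b)) = x + h" .
  have "G (x + h) \<le> (\<Sum>b\<in>Basis. (1/n) * G (x + (n * (h \<bullet> b)) *\<^sub>R b))"
    unfolding bary[symmetric] by (rule convex_on_sum[OF _ _ cv]) (use n U in \<open>auto simp: n_def\<close>)
  then show ?thesis unfolding n_def by simp
qed

lemma convex_on_partials_upper_estimate:
  fixes G :: "'a::euclidean_space \<Rightarrow> real"
  assumes cv: "convex_on U G" and oU: "open U" and xU: "x \<in> U"
    and D: "\<And>b. b \<in> Basis \<Longrightarrow> ((\<lambda>s. G (x + s *\<^sub>R b)) has_real_derivative D b) (at 0)"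
    and e: "e > 0"
  shows "\<exists>d>0. \<forall>h. norm h < d \<longrightarrow> G (x + h) - G x - (\<Sum>b\<in>Basis. (h \<bullet> b) * D b) \<le> e * norm h"
proof -
  \<comment> \<open>Bound \<open>G (x + h)\<close> by an average of values on the coordinate lines through \<open>x\<close>, where the
      one-dimensional first-order expansions apply.\<close>
  define n where "n = real DIM('a)"
  have n: "n \<ge> 1" unfolding n_def using DIM_positive by (simp add: Suc_le_eq)
  obtain r where r: "r > 0" "ball x r \<subseteq> U" using oU xU openE by blast
  have "\<exists>\<delta>>0. \<forall>s. \<bar>s\<bar> < \<delta> \<longrightarrow> \<bar>G (x + s *\<^sub>R b) - G x - s * D b\<bar> \<le> (e/n) * \<bar>s\<bar>"
    if b: "b \<in> Basis" for b
  proof -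
    have "e/n > 0" using e n by simp
    from has_real_derivative_first_order_bound[OF D[OF b] this] show ?thesis by simp
  qed
  then obtain \<delta> where \<delta>: "\<And>b. b \<in> Basis \<Longrightarrow> \<delta> b > 0"
    "\<And>b s. b \<in> Basis \<Longrightarrow> \<bar>s\<bar> < \<delta> b \<Longrightarrow> \<bar>G (x + s *\<^sub>R b) - G x - s * D b\<bar> \<le> (e/n) * \<bar>s\<bar>"
    by metis
  define d where "d = min r (Min (\<delta> ` Basis)) / n"
  have "G (x + h) - G x - (\<Sum>b\<in>Basis. (h \<bullet> b) * D b) \<le> e * norm h" if h: "norm h < d" for h
  proof -
    have small: "\<bar>n * (h \<bullet> b)\<bar> < min r (Min (\<delta> ` Basis))" if "b \<in> Basis" for b
    proof -
      have "\<bar>n * (h \<bullet> b)\<bar> \<le> n * norm h" using n Basis_le_norm[OF that] by (simp add: abs_mult)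
      also have "\<dots> < min r (Min (\<delta> ` Basis))" using h n unfolding d_def by (simp add: field_simps)
      finally show ?thesis .
    qed
    have "G (x + h) \<le> (\<Sum>b\<in>Basis. G (x + (n * (h \<bullet> b)) *\<^sub>R b) / n)"
      unfolding n_def using small r by (intro convex_on_le_basis_average[OF cv]) (auto simp: n_def dist_norm)
    also have "\<dots> \<le> (\<Sum>b\<in>Basis. G x / n + (h \<bullet> b) * D b + (e/n) * \<bar>h \<bullet> b\<bar>)"
    proof (rule sum_mono)
      fix b :: 'a assume b: "b \<in> Basis"
      have "\<bar>n * (h \<bullet> b)\<bar> < \<delta> b" using small[OF b] Min_le[of "\<delta> ` Basis" "\<delta> b"] b by force
      then have "G (x + (n * (h \<bullet> b)) *\<^sub>R b) \<le> G x + n * ((h \<bullet> b) * D b) + n * ((e/n) * \<bar>h \<bullet> b\<bar>)"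
        using \<delta>(2)[OF b, of "n * (h \<bullet> b)"] n by (simp add: abs_mult algebra_simps)
      then show "G (x + (n * (h \<bullet> b)) *\<^sub>R b) / n \<le> G x / n + (h \<bullet> b) * D b + (e/n) * \<bar>h \<bullet> b\<bar>"
        using n by (simp add: field_simps)
    qed
    also have "\<dots> = G x + (\<Sum>b\<in>Basis. (h \<bullet> b) * D b) + (\<Sum>b\<in>Basis. (e/n) * \<bar>h \<bullet> b\<bar>)"
      using n by (simp add: sum.distrib n_def)
    also have "(\<Sum>b\<in>Basis. (e/n) * \<bar>h \<bullet> b\<bar>) \<le> (\<Sum>b\<in>(Basis::'a set). (e/n) * norm h)"
      using n e by (intro sum_mono mult_left_mono Basis_le_norm) auto
    also have "(\<Sum>b\<in>(Basis::'a set). (e/n) * norm h) = e * norm h" using n by (simp add: n_def)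
    finally show ?thesis by simp
  qed
  moreover have "d > 0" unfolding d_def using r \<delta>(1) n by auto
  ultimately show ?thesis by blast
qed

lemma convex_on_has_derivative_if_partials:
  fixes G :: "'a::euclidean_space \<Rightarrow> real"
  assumes cv: "convex_on U G" and oU: "open U" and xU: "x \<in> U"
    and D: "\<And>b. b \<in> Basis \<Longrightarrow> ((\<lambda>s. G (x + s *\<^sub>R b)) has_real_derivative D b) (at 0)"
  shows "(G has_derivative (\<lambda>h. \<Sum>b\<in>Basis. (h \<bullet> b) * D b)) (at x)"
proof -
  define L where "L = (\<lambda>h. \<Sum>b\<in>Basis. (h \<bullet> b) * D b)"
  have L: "bounded_linear L" unfolding L_def
    by (intro bounded_linear_sum
        bounded_linear_compose[OF bounded_linear_mult_left bounded_linear_inner_left])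
  obtain r where r: "r > 0" "ball x r \<subseteq> U" using oU xU openE by blast
  show ?thesis unfolding L_def[symmetric] has_derivative_at_alt
  proof (intro conjI L allI impI)
    fix e :: real assume "e > 0"
    then obtain d where d: "d > 0" "\<And>h. norm h < d \<Longrightarrow> G (x + h) - G x - L h \<le> e * norm h"
      using convex_on_partials_upper_estimate[OF cv oU xU D] unfolding L_def by blast
    show "\<exists>d>0. \<forall>y. norm (y - x) < d \<longrightarrow> norm (G y - G x - L (y - x)) \<le> e * norm (y - x)"
    proof (intro exI[of _ "min d r"] conjI allI impI)
      fix y assume y: "norm (y - x) < min d r"
      define h where "h = y - x"
      have "x + h \<in> U" "x - h \<in> U"
        using y r unfolding h_def by (auto simp: dist_norm norm_minus_commute)
      \<comment> \<open>The lower estimate follows from the upper one at \<open>-h\<close> by midpoint convexity.\<close>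
      then have "G x \<le> (1/2) * G (x + h) + (1/2) * G (x - h)"
        using convex_onD[OF cv, of "1/2" "x + h" "x - h"]
        by (simp add: scaleR_add_right algebra_simps flip: scaleR_add_left)
      moreover have "norm h < d" using y unfolding h_def by simp
      then have "G (x + h) - G x - L h \<le> e * norm h" "G (x - h) - G x - L (-h) \<le> e * norm h"
        using d(2)[of h] d(2)[of "-h"] by auto
      moreover have "L (-h) = - L h" using L by (simp add: linear_simps)
      ultimately have "\<bar>G (x + h) - G x - L h\<bar> \<le> e * norm h" by linarith
      then show "norm (G y - G x - L (y - x)) \<le> e * norm (y - x)" unfolding h_def by simp
    qed (use d r in auto)
  qed
qed

lemma open_line_preimage:
  fixes U :: "'a::real_normed_vector set"
  assumes "open U"
  shows "open {s::real. z + s *\<^sub>R b \<in> U}"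
proof -
  have "{s::real. z + s *\<^sub>R b \<in> U} = (\<lambda>s. z + s *\<^sub>R b) -` U" by auto
  then show ?thesis using assms by (simp only:) (intro continuous_open_vimage continuous_intros)
qed

lemma convex_line_preimage:
  fixes U :: "'a::real_vector set"
  assumes "convex U"
  shows "convex {s::real. z + s *\<^sub>R b \<in> U}"
  unfolding convex_def
proof (intro ballI allI impI)
  fix s s' u v :: real assume "s \<in> {s. z + s *\<^sub>R b \<in> U}" "s' \<in> {s. z + s *\<^sub>R b \<in> U}"
    and uv: "0 \<le> u" "0 \<le> v" "u + v = 1"
  moreover have "z + (u *\<^sub>R s + v *\<^sub>R s') *\<^sub>R b = u *\<^sub>R (z + s *\<^sub>R b) + v *\<^sub>R (z + s' *\<^sub>R b)"
    using uv by (simp add: algebra_simps flip: scaleR_add_left)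
  ultimately show "u *\<^sub>R s + v *\<^sub>R s' \<in> {s. z + s *\<^sub>R b \<in> U}"
    using assms by (simp add: convex_def)
qed

lemma convex_on_line:
  fixes G :: "'a::real_vector \<Rightarrow> real"
  assumes cv: "convex_on U G"
  shows "convex_on {s::real. z + s *\<^sub>R b \<in> U} (\<lambda>s. G (z + s *\<^sub>R b))"
proof (rule convex_onI)
  fix t s s' :: real assume "0 < t" "t < 1" "s \<in> {s. z + s *\<^sub>R b \<in> U}" "s' \<in> {s. z + s *\<^sub>R b \<in> U}"
  moreover have "z + ((1 - t) *\<^sub>R s + t *\<^sub>R s') *\<^sub>R b = (1 - t) *\<^sub>R (z + s *\<^sub>R b) + t *\<^sub>R (z + s' *\<^sub>R b)"
    by (simp add: algebra_simps)
  ultimately show "G (z + ((1 - t) *\<^sub>R s + t *\<^sub>R s') *\<^sub>R b)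
      \<le> (1 - t) * G (z + s *\<^sub>R b) + t * G (z + s' *\<^sub>R b)"
    using convex_onD[OF cv, of t] by auto
next
  show "convex {s::real. z + s *\<^sub>R b \<in> U}"
    using convex_line_preimage[OF convex_on_imp_convex[OF cv]] .
qed

text \<open>Sequential difference quotients keep these Borel measurable whenever \<open>G\<close> is.\<close>

definition dir_right_deriv :: "('a::real_normed_vector \<Rightarrow> real) \<Rightarrow> 'a \<Rightarrow> 'a \<Rightarrow> real" where
  "dir_right_deriv G b x = lim (\<lambda>n. real (Suc n) * (G (x + inverse (real (Suc n)) *\<^sub>R b) - G x))"

definition dir_left_deriv :: "('a::real_normed_vector \<Rightarrow> real) \<Rightarrow> 'a \<Rightarrow> 'a \<Rightarrow> real" where
  "dir_left_deriv G b x = lim (\<lambda>n. real (Suc n) * (G x - G (x - inverse (real (Suc n)) *\<^sub>R b)))"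

lemma borel_measurable_dir_right_deriv:
  fixes G :: "'a::euclidean_space \<Rightarrow> real"
  assumes "G \<in> borel_measurable borel"
  shows "dir_right_deriv G b \<in> borel_measurable borel"
  unfolding dir_right_deriv_def using assms by measurable

lemma borel_measurable_dir_left_deriv:
  fixes G :: "'a::euclidean_space \<Rightarrow> real"
  assumes "G \<in> borel_measurable borel"
  shows "dir_left_deriv G b \<in> borel_measurable borel"
  unfolding dir_left_deriv_def using assms by measurable

lemma dir_derivs_on_line:
  fixes G :: "'a::real_normed_vector \<Rightarrow> real"
  assumes cv: "convex_on U G" and oU: "open U" and zt: "z + t *\<^sub>R b \<in> U"
  shows "dir_right_deriv G b (z + t *\<^sub>R b) = right_deriv (\<lambda>s. G (z + s *\<^sub>R b)) {s. z + s *\<^sub>R b \<in> U} t"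
    and "dir_left_deriv G b (z + t *\<^sub>R b) = left_deriv (\<lambda>s. G (z + s *\<^sub>R b)) {s. z + s *\<^sub>R b \<in> U} t"
proof -
  define \<psi> where "\<psi> = (\<lambda>s. G (z + s *\<^sub>R b))"
  define J where "J = {s. z + s *\<^sub>R b \<in> U}"
  have oJ: "open J" and cJ: "convex_on J \<psi>" and tJ: "t \<in> J"
    unfolding J_def \<psi>_def using open_line_preimage[OF oU] convex_on_line[OF cv] zt by auto
  define h where "h n = inverse (real (Suc n))" for n
  have h0: "h \<longlonglongrightarrow> 0" unfolding h_def by (rule LIMSEQ_inverse_real_of_nat)
  have hpos: "h n > 0" for n unfolding h_def by simp
  have "filterlim h (at_right 0) sequentially"
    by (rule tendsto_imp_filterlim_at_right[OF h0]) (use hpos in auto)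
  from filterlim_compose[OF right_deriv_tendsto[OF cJ oJ tJ] this]
  have "(\<lambda>n. real (Suc n) * (G (z + t *\<^sub>R b + inverse (real (Suc n)) *\<^sub>R b) - G (z + t *\<^sub>R b)))
      \<longlonglongrightarrow> right_deriv \<psi> J t"
    by (simp add: h_def \<psi>_def divide_inverse mult.commute scaleR_add_left add.assoc)
  then show "dir_right_deriv G b (z + t *\<^sub>R b) = right_deriv (\<lambda>s. G (z + s *\<^sub>R b)) {s. z + s *\<^sub>R b \<in> U} t"
    unfolding dir_right_deriv_def \<psi>_def J_def by (rule limI)
  have "filterlim (\<lambda>n. - h n) (at_left 0) sequentially"
    by (rule tendsto_imp_filterlim_at_left)
      (use h0 hpos in \<open>auto intro: tendsto_minus_cancel_left[THEN iffD1]\<close>)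
  from filterlim_compose[OF left_deriv_tendsto[OF cJ oJ tJ] this]
  have "(\<lambda>n. real (Suc n) * (G (z + t *\<^sub>R b) - G (z + t *\<^sub>R b - inverse (real (Suc n)) *\<^sub>R b)))
      \<longlonglongrightarrow> left_deriv \<psi> J t"
    by (simp add: h_def \<psi>_def divide_inverse mult.commute scaleR_diff_left algebra_simps)
  then show "dir_left_deriv G b (z + t *\<^sub>R b) = left_deriv (\<lambda>s. G (z + s *\<^sub>R b)) {s. z + s *\<^sub>R b \<in> U} t"
    unfolding dir_left_deriv_def \<psi>_def J_def by (rule limI)
qed

lemma convex_on_cong_pointwise:
  assumes "convex_on U f" and "\<And>x. x \<in> U \<Longrightarrow> f x = g x"
  shows "convex_on U g"
proof (rule convex_onI)
  show cU: "convex U" using convex_on_imp_convex[OF assms(1)] .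
  fix t :: real and x y assume "0 < t" "t < 1" "x \<in> U" "y \<in> U"
  moreover have "(1 - t) *\<^sub>R x + t *\<^sub>R y \<in> U" using convexD[OF cU] calculation by simp
  ultimately show "g ((1 - t) *\<^sub>R x + t *\<^sub>R y) \<le> (1 - t) * g x + t * g y"
    using convex_onD[OF assms(1), of t x y] assms(2) by simp
qed

lemma null_sets_dir_derivs_differ:
  fixes G :: "'a::euclidean_space \<Rightarrow> real"
  assumes cv: "convex_on U G" and oU: "open U" and G: "G \<in> borel_measurable borel"
  shows "{x\<in>U. dir_left_deriv G b x \<noteq> dir_right_deriv G b x} \<in> null_sets lborel"
proof (rule null_sets_lborel_if_countable_lines[where b=b])
  show "{x\<in>U. dir_left_deriv G b x \<noteq> dir_right_deriv G b x} \<in> sets borel"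
    using borel_measurable_dir_left_deriv[OF G] borel_measurable_dir_right_deriv[OF G] borel_open[OF oU]
    by measurable
  fix z
  have "{t. z + t *\<^sub>R b \<in> {x\<in>U. dir_left_deriv G b x \<noteq> dir_right_deriv G b x}}
      \<subseteq> {t \<in> {s. z + s *\<^sub>R b \<in> U}. left_deriv (\<lambda>s. G (z + s *\<^sub>R b)) {s. z + s *\<^sub>R b \<in> U} t
          \<noteq> right_deriv (\<lambda>s. G (z + s *\<^sub>R b)) {s. z + s *\<^sub>R b \<in> U} t}"
    using dir_derivs_on_line[OF cv oU] by auto
  then show "countable {t. z + t *\<^sub>R b \<in> {x\<in>U. dir_left_deriv G b x \<noteq> dir_right_deriv G b x}}"
    using countable_left_deriv_neq_right_deriv[OF convex_on_line[OF cv] open_line_preimage[OF oU]]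
      countable_subset by blast
qed

lemma convex_on_ae_differentiable:
  fixes G :: "'a::euclidean_space \<Rightarrow> real"
  assumes cv: "convex_on U G" and oU: "open U"
  shows "\<exists>N\<in>null_sets lborel. \<forall>x\<in>U - N. G differentiable (at x)"
proof -
  \<comment> \<open>\<open>H\<close> agrees with \<open>G\<close> on \<open>U\<close> and, unlike \<open>G\<close>, is Borel measurable on the whole space.\<close>
  define H where "H x = indicator U x * G x" for x
  have HG: "\<And>x. x \<in> U \<Longrightarrow> H x = G x" by (simp add: H_def)
  have cvH: "convex_on U H" by (rule convex_on_cong_pointwise[OF cv]) (simp add: HG)
  have "H \<in> borel_measurable borel"
    using borel_measurable_continuous_on_indicator[OF borel_open[OF oU] convex_on_continuous[OF oU cv]]
    unfolding H_def by simp
  define N where "N = (\<Union>b\<in>Basis. {x\<in>U. dir_left_deriv H b x \<noteq> dir_right_deriv H b x})"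
  have "N \<in> null_sets lborel"
    unfolding N_def using null_sets_dir_derivs_differ[OF cvH oU \<open>H \<in> _\<close>] by auto
  moreover have "G differentiable (at x)" if x: "x \<in> U - N" for x
  proof -
    have "((\<lambda>s. H (x + s *\<^sub>R b)) has_real_derivative dir_right_deriv H b x) (at 0)"
      if b: "b \<in> Basis" for b
    proof -
      have xU: "x + 0 *\<^sub>R b \<in> U" using x by simp
      have "dir_left_deriv H b x = dir_right_deriv H b x" using x b unfolding N_def by auto
      then show ?thesis
        using dir_derivs_on_line[OF cvH oU xU] xU has_real_derivative_if_left_deriv_eq_right_deriv
          [OF convex_on_line[OF cvH, of x b] open_line_preimage[OF oU, of x b], where t=0]
        by simp
    qed
    then have "(H has_derivative (\<lambda>h. \<Sum>b\<in>Basis. (h \<bullet> b) * dir_right_deriv H b x)) (at x)"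
      using x by (intro convex_on_has_derivative_if_partials[OF cvH oU]) auto
    then have "(G has_derivative (\<lambda>h. \<Sum>b\<in>Basis. (h \<bullet> b) * dir_right_deriv H b x)) (at x)"
      by (rule has_derivative_transform_within_open[OF _ oU]) (use x HG in auto)
    then show ?thesis unfolding differentiable_def by blast
  qed
  ultimately show ?thesis by blast
qed

section \<open>Semiconcave functions\<close>

lemma convex_on_if_derivative_monotone:
  fixes G :: "'a::real_normed_vector \<Rightarrow> real"
  assumes oU: "open U" and cU: "convex U"
    and der: "\<And>x. x \<in> U \<Longrightarrow> (G has_derivative G' x) (at x)"
    and mono: "\<And>x z. x \<in> U \<Longrightarrow> z \<in> U \<Longrightarrow> G' x (z - x) \<le> G' z (z - x)"
  shows "convex_on U G"
proof (rule convex_onI[OF _ cU])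
  fix t :: real and x z assume t: "0 < t" "t < 1" and xz: "x \<in> U" "z \<in> U"
  define A where "A = {s::real. x + s *\<^sub>R (z - x) \<in> U}"
  define g where "g s = G (x + s *\<^sub>R (z - x))" for s
  define g' where "g' s = G' (x + s *\<^sub>R (z - x)) (z - x)" for s
  have lin: "bounded_linear (G' (x + s *\<^sub>R (z - x)))" if "s \<in> A" for s
    using der that unfolding A_def by (auto intro: has_derivative_bounded_linear)
  have gder: "(g has_real_derivative g' s) (at s)" if "s \<in> A" for s
  proof -
    have "((\<lambda>s. x + s *\<^sub>R (z - x)) has_derivative (\<lambda>h. h *\<^sub>R (z - x))) (at s)"
      by (auto intro!: derivative_eq_intros)
    from has_derivative_compose[OF this der] that
    have "(g has_derivative (\<lambda>h. G' (x + s *\<^sub>R (z - x)) (h *\<^sub>R (z - x)))) (at s)"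
      unfolding g_def A_def by auto
    then have "(g has_derivative (\<lambda>h. h * g' s)) (at s)"
      using lin[OF that] unfolding g'_def by (simp add: linear_simps)
    moreover have "(\<lambda>h. h * g' s) = (*) (g' s)" by (auto simp: fun_eq_iff)
    ultimately show ?thesis unfolding has_field_derivative_def by simp
  qed
  have "g' s \<le> g' s'" if "s \<in> A" "s' \<in> A" "s < s'" for s s'
  proof -
    let ?p = "x + s *\<^sub>R (z - x)" and ?q = "x + s' *\<^sub>R (z - x)"
    have pq: "?q - ?p = (s' - s) *\<^sub>R (z - x)" by (simp add: algebra_simps)
    have "G' ?p (?q - ?p) \<le> G' ?q (?q - ?p)" using mono[of ?p ?q] that unfolding A_def by blast
    then have "(s' - s) * G' ?p (z - x) \<le> (s' - s) * G' ?q (z - x)"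
      unfolding pq using lin that by (simp add: linear_simps)
    then show ?thesis unfolding g'_def using that by simp
  qed
  then have "convex_on A g"
    using convex_line_preimage[OF cU, of x "z - x"] unfolding A_def[symmetric]
    by (intro convex_on_realI[where f'=g'] gder convex_connected) (auto simp: order_le_less)
  moreover have "0 \<in> A" "1 \<in> A" using xz unfolding A_def by auto
  ultimately have "g ((1 - t) *\<^sub>R 0 + t *\<^sub>R 1) \<le> (1 - t) * g 0 + t * g 1"
    using t by (intro convex_onD) auto
  moreover have "x + t *\<^sub>R (z - x) = (1 - t) *\<^sub>R x + t *\<^sub>R z" by (simp add: algebra_simps)
  ultimately show "G ((1 - t) *\<^sub>R x + t *\<^sub>R z) \<le> (1 - t) * G x + t * G z"
    unfolding g_def by simp
qed

lemma convex_on_cSUP: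
  fixes F :: "'b \<Rightarrow> 'a::real_vector \<Rightarrow> real"
  assumes cv: "\<And>y. y \<in> K \<Longrightarrow> convex_on U (F y)" and cU: "convex U" and K: "K \<noteq> {}"
    and bdd: "\<And>x. x \<in> U \<Longrightarrow> bdd_above ((\<lambda>y. F y x) ` K)"
  shows "convex_on U (\<lambda>x. SUP y\<in>K. F y x)"
proof (rule convex_onI[OF _ cU])
  fix t :: real and x z assume t: "0 < t" "t < 1" and xz: "x \<in> U" "z \<in> U"
  show "(SUP y\<in>K. F y ((1 - t) *\<^sub>R x + t *\<^sub>R z)) \<le> (1 - t) * (SUP y\<in>K. F y x) + t * (SUP y\<in>K. F y z)"
  proof (rule cSUP_least[OF K])
    fix y assume y: "y \<in> K"
    have "F y ((1 - t) *\<^sub>R x + t *\<^sub>R z) \<le> (1 - t) * F y x + t * F y z"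
      using convex_onD[OF cv[OF y]] t xz by auto
    also have "\<dots> \<le> (1 - t) * (SUP y\<in>K. F y x) + t * (SUP y\<in>K. F y z)"
      using t xz cSUP_upper[OF y bdd] by (intro add_mono mult_left_mono) auto
    finally show "F y ((1 - t) *\<^sub>R x + t *\<^sub>R z) \<le> (1 - t) * (SUP y\<in>K. F y x) + t * (SUP y\<in>K. F y z)" .
  qed
qed

lemma diff_cINF_eq_cSUP:
  fixes f :: "'b \<Rightarrow> real"
  assumes bdd: "bdd_below (f ` K)" and K: "K \<noteq> {}"
  shows "a - (INF y\<in>K. f y) = (SUP y\<in>K. a - f y)"
proof -
  have "bdd_above ((\<lambda>y. - f y) ` K)"
    using cINF_lower[OF bdd] by (intro bdd_aboveI[of _ "- (INF y\<in>K. f y)"]) force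
  then have "(SUP y\<in>K. a + - f y) = a + (SUP y\<in>K. - f y)" by (rule Sup_add_eq[OF _ K])
  then show ?thesis using uminus_cINF[OF bdd K] by simp
qed

lemma convex_on_quadratic_minus_if_derivative_bound:
  fixes g :: "'a::real_inner \<Rightarrow> real"
  assumes oU: "open U" and cU: "convex U" and L: "L \<ge> 0"
    and der: "\<And>x. x \<in> U \<Longrightarrow> (g has_derivative g' x) (at x)"
    and bound: "\<And>x z. x \<in> U \<Longrightarrow> z \<in> U \<Longrightarrow> g' z (z - x) - g' x (z - x) \<le> L * norm (z - x)^2"
  shows "convex_on U (\<lambda>x. L * (x \<bullet> x) - g x)"
proof (rule convex_on_if_derivative_monotone[OF oU cU])
  fix x assume "x \<in> U"
  then show "((\<lambda>x. L * (x \<bullet> x) - g x) has_derivative (\<lambda>h. L * (h \<bullet> x + x \<bullet> h) - g' x h)) (at x)"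
    by (auto intro!: derivative_eq_intros der)
next
  fix x z assume "x \<in> U" "z \<in> U"
  moreover have "L * ((z - x) \<bullet> z + z \<bullet> (z - x)) = L * ((z - x) \<bullet> x + x \<bullet> (z - x)) + 2 * L * norm (z - x)^2"
    unfolding power2_norm_eq_inner inner_commute[of z "z - x"] inner_commute[of x "z - x"]
    by (simp add: inner_diff_right algebra_simps)
  moreover have "0 \<le> L * norm (z - x)^2" using L by simp
  ultimately show "L * ((z - x) \<bullet> x + x \<bullet> (z - x)) - g' x (z - x)
      \<le> L * ((z - x) \<bullet> z + z \<bullet> (z - x)) - g' z (z - x)"
    using bound[of x z] by linarith
qed

lemma continuous_on_if_semiconcave:
  fixes f :: "'a::euclidean_space \<Rightarrow> real"
  assumes cv: "convex_on U (\<lambda>x. L * (x \<bullet> x) - f x)" and oU: "open U"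
  shows "continuous_on U f"
proof -
  have "continuous_on U (\<lambda>x. L * (x \<bullet> x) - (L * (x \<bullet> x) - f x))"
    by (intro continuous_intros convex_on_continuous[OF oU cv])
  then show ?thesis by simp
qed

lemma ae_differentiable_if_semiconcave:
  fixes f :: "'a::euclidean_space \<Rightarrow> real"
  assumes cv: "convex_on U (\<lambda>x. L * (x \<bullet> x) - f x)" and oU: "open U"
  shows "\<exists>N\<in>null_sets lborel. \<forall>x\<in>U - N. f differentiable (at x)"
proof -
  obtain N where N: "N \<in> null_sets lborel" "\<And>x. x \<in> U - N \<Longrightarrow> (\<lambda>x. L * (x \<bullet> x) - f x) differentiable (at x)"
    using convex_on_ae_differentiable[OF cv oU] by blast
  have "f differentiable (at x)" if "x \<in> U - N" for x
  proof -
    have "(\<lambda>x. L * (x \<bullet> x)) differentiable (at x)"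
      unfolding differentiable_def by (auto intro!: derivative_eq_intros)
    from differentiable_diff[OF this N(2)[OF that]] show ?thesis by simp
  qed
  then show ?thesis using N(1) by blast
qed

lemma ae_differentiable_if_locally_ae_differentiable:
  fixes f :: "'a::euclidean_space \<Rightarrow> real"
  assumes local: "\<And>x. x \<in> S \<Longrightarrow> \<exists>U. open U \<and> x \<in> U \<and> (\<exists>N\<in>null_sets lborel. \<forall>z\<in>U - N. f differentiable (at z))"
  shows "\<exists>N\<in>null_sets lborel. \<forall>x\<in>S - N. f differentiable (at x)"
proof -
  define \<F> where "\<F> = {U. open U \<and> (\<exists>N\<in>null_sets lborel. \<forall>z\<in>U - N. f differentiable (at z))}"
  obtain \<F>' where \<F>': "\<F>' \<subseteq> \<F>" "countable \<F>'" "\<Union>\<F>' = \<Union>\<F>"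
    using Lindelof[of \<F>] unfolding \<F>_def by auto
  have "\<forall>U\<in>\<F>'. \<exists>N\<in>null_sets lborel. \<forall>z\<in>U - N. f differentiable (at z)"
    using \<F>'(1) unfolding \<F>_def by blast
  then obtain N where N: "\<And>U. U \<in> \<F>' \<Longrightarrow> N U \<in> null_sets lborel \<and> (\<forall>z\<in>U - N U. f differentiable (at z))"
    by metis
  have "(\<Union>U\<in>\<F>'. N U) \<in> null_sets lborel" using N \<F>'(2) by (intro null_sets_UN') auto
  moreover have "f differentiable (at x)" if x: "x \<in> S - (\<Union>U\<in>\<F>'. N U)" for x
  proof -
    have "x \<in> \<Union>\<F>" using local[of x] x unfolding \<F>_def by auto
    then obtain U where "U \<in> \<F>'" "x \<in> U" using \<F>'(3) by auto
    then show ?thesis using N x by blast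
  qed
  ultimately show ?thesis by blast
qed

section \<open>Weak duality\<close>

lemma AE_in_prob_on:
  assumes "prob_on S M" and "S \<in> sets borel"
  shows "AE x in M. x \<in> S"
proof -
  have M: "sets M = sets borel" "emeasure M (space M - S) = 0"
    using assms(1) unfolding prob_on_def by auto
  then have "space M = UNIV" using sets_eq_imp_space_eq[OF M(1)] by simp
  then have "UNIV - S \<in> null_sets M" using M assms(2) by (auto simp: null_sets_def)
  then show ?thesis by (rule AE_I') (auto simp: \<open>space M = UNIV\<close>)
qed

lemma borel_measurable_fst_snd:
  "fst \<in> borel_measurable (borel :: ('a::topological_space \<times> 'b::topological_space) measure)"
  "snd \<in> borel_measurable (borel :: ('a::topological_space \<times> 'b::topological_space) measure)"
  by (intro borel_measurable_continuous_onI continuous_intros)+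

lemma measurable_coupling_fst_snd:
  assumes "\<pi> \<in> couplings \<mu> \<nu>"
  shows "fst \<in> measurable \<pi> (borel :: 'a::euclidean_space measure)"
    and "snd \<in> measurable \<pi> (borel :: 'a measure)"
proof -
  have "sets \<pi> = sets (borel :: ('a \<times> 'a) measure)" using assms unfolding couplings_def by auto
  then show "fst \<in> measurable \<pi> (borel :: 'a measure)" and "snd \<in> measurable \<pi> (borel :: 'a measure)"
    using borel_measurable_fst_snd measurable_cong_sets[OF _ refl] by blast+
qed

lemma AE_coupling_in:
  fixes X Y :: "'a::euclidean_space set"
  assumes \<pi>: "\<pi> \<in> couplings \<mu> \<nu>" and XY: "X \<in> sets borel" "Y \<in> sets borel"
    and "AE x in \<mu>. x \<in> X" and "AE y in \<nu>. y \<in> Y"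
  shows "AE p in \<pi>. fst p \<in> X \<and> snd p \<in> Y"
proof -
  have "distr \<pi> borel fst = \<mu>" "distr \<pi> borel snd = \<nu>" using \<pi> unfolding couplings_def by auto
  moreover have "{x \<in> space borel. x \<in> X} \<in> sets borel" "{y \<in> space borel. y \<in> Y} \<in> sets borel"
    using XY by simp_all
  ultimately have "AE p in \<pi>. fst p \<in> X" "AE p in \<pi>. snd p \<in> Y"
    using assms(4,5) AE_distr_iff[OF measurable_coupling_fst_snd(1)[OF \<pi>]]
      AE_distr_iff[OF measurable_coupling_fst_snd(2)[OF \<pi>]] by auto
  then show ?thesis by eventually_elim simp
qed

lemma nn_integral_le_coupling:
  fixes g h :: "'a::euclidean_space \<Rightarrow> real" and c :: "'a \<Rightarrow> 'a \<Rightarrow> real"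
  assumes \<pi>: "\<pi> \<in> couplings \<mu> \<nu>" and XY: "X \<in> sets borel" "Y \<in> sets borel"
    and \<mu>X: "AE x in \<mu>. x \<in> X" and \<nu>Y: "AE y in \<nu>. y \<in> Y"
    and g: "g \<in> borel_measurable borel" and h: "h \<in> borel_measurable borel"
    and cost: "(\<lambda>p. indicator (X \<times> Y) p * ennreal (c (fst p) (snd p))) \<in> borel_measurable borel"
    and le: "\<And>x y. x \<in> X \<Longrightarrow> y \<in> Y \<Longrightarrow> g x \<le> c x y + h y"
    and c_nonneg: "\<And>x y. x \<in> X \<Longrightarrow> y \<in> Y \<Longrightarrow> 0 \<le> c x y" and h_nonneg: "\<And>y. 0 \<le> h y"
  shows "(\<integral>\<^sup>+ x. g x \<partial>\<mu>)
    \<le> (\<integral>\<^sup>+ p. indicator (X \<times> Y) p * ennreal (c (fst p) (snd p)) \<partial>\<pi>) + (\<integral>\<^sup>+ y. h y \<partial>\<nu>)"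
proof -
  have \<pi>_sets: "sets \<pi> = sets (borel :: ('a \<times> 'a) measure)"
    and \<mu>: "distr \<pi> borel fst = \<mu>" and \<nu>: "distr \<pi> borel snd = \<nu>"
    using \<pi> unfolding couplings_def by auto
  note proj = measurable_coupling_fst_snd[OF \<pi>]
  have "AE p in \<pi>. ennreal (g (fst p))
      \<le> indicator (X \<times> Y) p * ennreal (c (fst p) (snd p)) + ennreal (h (snd p))"
    using AE_coupling_in[OF \<pi> XY \<mu>X \<nu>Y]
  proof eventually_elim
    case (elim p)
    then have "ennreal (g (fst p)) \<le> ennreal (c (fst p) (snd p) + h (snd p))"
      using le by (intro ennreal_leI) auto
    also have "\<dots> = ennreal (c (fst p) (snd p)) + ennreal (h (snd p))"
      using elim c_nonneg h_nonneg by (intro ennreal_plus) auto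
    finally show ?case using elim by (simp add: mem_Times_iff)
  qed
  then have "(\<integral>\<^sup>+ p. g (fst p) \<partial>\<pi>)
      \<le> (\<integral>\<^sup>+ p. indicator (X \<times> Y) p * ennreal (c (fst p) (snd p)) + ennreal (h (snd p)) \<partial>\<pi>)"
    by (rule nn_integral_mono_AE)
  also have "\<dots> = (\<integral>\<^sup>+ p. indicator (X \<times> Y) p * ennreal (c (fst p) (snd p)) \<partial>\<pi>) + (\<integral>\<^sup>+ p. h (snd p) \<partial>\<pi>)"
  proof (rule nn_integral_add)
    show "(\<lambda>p. indicator (X \<times> Y) p * ennreal (c (fst p) (snd p))) \<in> borel_measurable \<pi>"
      using cost measurable_cong_sets[OF \<pi>_sets refl] by blast
    have "(\<lambda>y. ennreal (h y)) \<in> borel_measurable borel" using h by measurable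
    from measurable_compose[OF proj(2) this] show "(\<lambda>p. ennreal (h (snd p))) \<in> borel_measurable \<pi>" .
  qed
  finally show ?thesis
    unfolding \<mu>[symmetric] \<nu>[symmetric] using proj g h by (simp add: nn_integral_distr)
qed

lemma nn_integral_shifted_set_integral:
  assumes M: "prob_space M" and f: "set_integrable M S f"
    and nonneg: "\<And>x. 0 \<le> indicator S x * f x + s"
  shows "(\<integral>\<^sup>+ x. ennreal (indicator S x * f x + s) \<partial>M) = ennreal ((LINT x:S|M. f x) + s)"
    and "0 \<le> (LINT x:S|M. f x) + s"
proof -
  interpret prob_space M by (rule M)
  have "(\<integral>x. indicator S x * f x + s \<partial>M) = (LINT x:S|M. f x) + s"
    using f unfolding set_lebesgue_integral_def set_integrable_def by (simp add: prob_space)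
  moreover have "integrable M (\<lambda>x. indicator S x * f x + s)"
    using f unfolding set_integrable_def by simp
  ultimately show "(\<integral>\<^sup>+ x. ennreal (indicator S x * f x + s) \<partial>M) = ennreal ((LINT x:S|M. f x) + s)"
    and "0 \<le> (LINT x:S|M. f x) + s"
    using nonneg Bochner_Integration.integral_nonneg[of M "\<lambda>x. indicator S x * f x + s"]
    by (auto simp: nn_integral_eq_integral)
qed

lemma ennreal_diff_le_if_le_add:
  assumes "0 \<le> b" "b \<le> a" "ennreal a \<le> C + ennreal b"
  shows "ennreal (a - b) \<le> C"
proof (cases C)
  case (real r)
  then have "ennreal a \<le> ennreal (r + b)" using assms ennreal_plus[of r b] by simp
  then have "a \<le> r + b" using assms real by (subst (asm) ennreal_le_iff) auto
  then show ?thesis using real by (simp add: ennreal_leI)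
qed simp

lemma ereal_diff_le_INF:
  assumes b: "0 \<le> b" and le: "\<And>i. i \<in> I \<Longrightarrow> ennreal a \<le> f i + ennreal b"
  shows "ereal (a - b) \<le> enn2ereal (INF i\<in>I. f i)"
proof (cases "b \<le> a")
  case True
  have "ennreal (a - b) \<le> (INF i\<in>I. f i)"
    using ennreal_diff_le_if_le_add[OF b True le] by (rule INF_greatest)
  then have "enn2ereal (ennreal (a - b)) \<le> enn2ereal (INF i\<in>I. f i)"
    by (simp add: less_eq_ennreal.rep_eq)
  then show ?thesis using True by simp
next
  case False
  then have "ereal (a - b) \<le> 0" by simp
  then show ?thesis using enn2ereal_nonneg order_trans by blast
qed

lemma set_integral_le_Kc:
  fixes g h :: "'a::euclidean_space \<Rightarrow> real" and c :: "'a \<Rightarrow> 'a \<Rightarrow> real"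
  assumes \<mu>: "prob_on X \<mu>" and \<nu>: "prob_on Y \<nu>" and XY: "X \<in> sets borel" "Y \<in> sets borel"
    and g: "(\<lambda>x. indicator X x * g x) \<in> borel_measurable borel" "set_integrable \<mu> X g"
      "\<And>x. x \<in> X \<Longrightarrow> m \<le> g x"
    and h: "(\<lambda>y. indicator Y y * h y) \<in> borel_measurable borel" "set_integrable \<nu> Y h"
      "\<And>y. y \<in> Y \<Longrightarrow> m \<le> h y"
    and cost: "(\<lambda>p. indicator (X \<times> Y) p * ennreal (c (fst p) (snd p))) \<in> borel_measurable borel"
    and le: "\<And>x y. x \<in> X \<Longrightarrow> y \<in> Y \<Longrightarrow> g x \<le> c x y + h y"
    and c_nonneg: "\<And>x y. x \<in> X \<Longrightarrow> y \<in> Y \<Longrightarrow> 0 \<le> c x y"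
  shows "ereal (LINT x:X|\<mu>. g x) \<le> ereal (LINT y:Y|\<nu>. h y) + enn2ereal (Kc X Y c \<mu> \<nu>)"
proof -
  \<comment> \<open>Shift both functions to be nonnegative and integrate the pointwise inequality against
      each coupling.\<close>
  define s where "s = \<bar>m\<bar>"
  have g_nonneg: "0 \<le> indicator X x * g x + s" for x
    using g(3)[of x] unfolding s_def by (auto simp: indicator_def)
  have h_nonneg: "0 \<le> indicator Y y * h y + s" for y
    using h(3)[of y] unfolding s_def by (auto simp: indicator_def)
  have prob: "prob_space \<mu>" "prob_space \<nu>" using \<mu> \<nu> unfolding prob_on_def by auto
  note g_int = nn_integral_shifted_set_integral[OF prob(1) g(2) g_nonneg]
  note h_int = nn_integral_shifted_set_integral[OF prob(2) h(2) h_nonneg]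
  have "ennreal ((LINT x:X|\<mu>. g x) + s)
      \<le> (\<integral>\<^sup>+ p. indicator (X \<times> Y) p * ennreal (c (fst p) (snd p)) \<partial>\<pi>) + ennreal ((LINT y:Y|\<nu>. h y) + s)"
    if "\<pi> \<in> couplings \<mu> \<nu>" for \<pi>
    unfolding g_int(1)[symmetric] h_int(1)[symmetric]
  proof (rule nn_integral_le_coupling[OF that XY])
    show "AE x in \<mu>. x \<in> X" "AE y in \<nu>. y \<in> Y"
      using AE_in_prob_on \<mu> \<nu> XY by auto
  qed (use g(1) h(1) cost c_nonneg h_nonneg le in \<open>auto simp: indicator_def\<close>)
  then have K: "ereal (((LINT x:X|\<mu>. g x) + s) - ((LINT y:Y|\<nu>. h y) + s)) \<le> enn2ereal (Kc X Y c \<mu> \<nu>)"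
    unfolding Kc_def by (rule ereal_diff_le_INF[OF h_int(2)])
  have "ereal (LINT x:X|\<mu>. g x)
      = ereal (LINT y:Y|\<nu>. h y) + ereal (((LINT x:X|\<mu>. g x) + s) - ((LINT y:Y|\<nu>. h y) + s))"
    by simp
  also have "\<dots> \<le> ereal (LINT y:Y|\<nu>. h y) + enn2ereal (Kc X Y c \<mu> \<nu>)"
    using K by (rule add_left_mono)
  finally show ?thesis .
qed

section \<open>The cost function\<close>

lemma has_derivative_partial_first:
  assumes "((\<lambda>(x, y). c x y) has_derivative D) (at (x, y))"
  shows "((\<lambda>x'. c x' y) has_derivative (\<lambda>h. D (h, 0))) (at x)"
proof -
  have "((\<lambda>x'. (x', y)) has_derivative (\<lambda>h. (h, 0))) (at x)"
    by (auto intro!: derivative_eq_intros)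
  from has_derivative_compose[OF this assms] show ?thesis by simp
qed

locale cost_setting =
  fixes X Y :: "'a::euclidean_space set" and c :: "'a \<Rightarrow> 'a \<Rightarrow> real" and x0 y0 :: 'a
  assumes cost_assms: "cost_assms X Y c x0 y0"
begin

lemma open_X: "open X" and open_Y: "open Y" and x0_in: "x0 \<in> X" and y0_in: "y0 \<in> Y"
  and cost_nonneg: "\<And>x y. x \<in> X \<Longrightarrow> y \<in> Y \<Longrightarrow> 0 \<le> c x y"
  and twist: "\<And>x. x \<in> X \<Longrightarrow> inj_on (grad_x c x) Y"
  and compact_sublevel_Y: "\<And>x b. x \<in> X \<Longrightarrow> compact {y\<in>Y. c x y \<le> b}"
  and cost_C2: "C2_on (X \<times> Y) (\<lambda>(x, y). c x y)"
  using cost_assms unfolding cost_assms_def by auto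

lemma cost_growth:
  obtains B where "B > 0" "\<And>x y. x \<in> X \<Longrightarrow> y \<in> Y \<Longrightarrow> c x0 y \<le> 2 * (c x y + B * c x y0)"
proof -
  have "\<forall>\<epsilon>>0. \<exists>B>0. \<forall>x\<in>X. \<forall>y\<in>Y. (1 - \<epsilon>) * c x0 y - B * c x y0 \<le> c x y"
    using cost_assms unfolding cost_assms_def by blast
  from this[rule_format, of "1/2"] obtain B
    where B: "B > 0" "\<And>x y. x \<in> X \<Longrightarrow> y \<in> Y \<Longrightarrow> (1 - 1/2) * c x0 y - B * c x y0 \<le> c x y"
    by auto
  show ?thesis
  proof (rule that[OF B(1)])
    fix x y assume "x \<in> X" "y \<in> Y"
    then show "c x0 y \<le> 2 * (c x y + B * c x y0)" using B(2)[of x y] by (simp add: algebra_simps)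
  qed
qed

lemma cost_derivatives:
  obtains D :: "'a \<times> 'a \<Rightarrow> (('a \<times> 'a) \<Rightarrow>\<^sub>L real)" and D2
  where "\<And>p. p \<in> X \<times> Y \<Longrightarrow> ((\<lambda>(x, y). c x y) has_derivative blinfun_apply (D p)) (at p)"
    "\<And>p. p \<in> X \<times> Y \<Longrightarrow> (D has_derivative blinfun_apply (D2 p)) (at p)"
    "continuous_on (X \<times> Y) D2"
  using cost_C2 unfolding C2_on_def by blast

lemma cost_continuous: "continuous_on (X \<times> Y) (\<lambda>(x, y). c x y)"
proof -
  obtain D :: "'a \<times> 'a \<Rightarrow> (('a \<times> 'a) \<Rightarrow>\<^sub>L real)" where
    "\<And>p. p \<in> X \<times> Y \<Longrightarrow> ((\<lambda>(x, y). c x y) has_derivative blinfun_apply (D p)) (at p)"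
    using cost_derivatives by metis
  moreover have "open (X \<times> Y)" using open_X open_Y by (simp add: open_Times)
  ultimately show ?thesis
    unfolding continuous_on_eq_continuous_at[OF \<open>open (X \<times> Y)\<close>] using has_derivative_continuous by blast
qed

lemma cost_continuous_x:
  assumes "y \<in> Y"
  shows "continuous_on X (\<lambda>x. c x y)"
proof -
  have "continuous_on X ((\<lambda>(x, y). c x y) \<circ> (\<lambda>x. (x, y)))"
    by (intro continuous_on_compose continuous_intros continuous_on_subset[OF cost_continuous])
      (use assms in auto)
  then show ?thesis by (simp add: o_def)
qed

lemma cost_continuous_y:
  assumes "x \<in> X"
  shows "continuous_on Y (\<lambda>y. c x y)"
proof -
  have "continuous_on Y ((\<lambda>(x, y). c x y) \<circ> (\<lambda>y. (x, y)))"
    by (intro continuous_on_compose continuous_intros continuous_on_subset[OF cost_continuous])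
      (use assms in auto)
  then show ?thesis by (simp add: o_def)
qed

lemma cost_partial_derivative_lipschitz:
  assumes r: "cball x1 r \<subseteq> X" and K: "compact K" "K \<subseteq> Y"
  obtains D :: "'a \<times> 'a \<Rightarrow> (('a \<times> 'a) \<Rightarrow>\<^sub>L real)" and L
  where "\<And>p. p \<in> X \<times> Y \<Longrightarrow> ((\<lambda>(x, y). c x y) has_derivative blinfun_apply (D p)) (at p)" "L \<ge> 0"
    "\<And>x z y. y \<in> K \<Longrightarrow> x \<in> cball x1 r \<Longrightarrow> z \<in> cball x1 r \<Longrightarrow> norm (D (z, y) - D (x, y)) \<le> L * norm (z - x)"
proof -
  obtain D :: "'a \<times> 'a \<Rightarrow> (('a \<times> 'a) \<Rightarrow>\<^sub>L real)" and D2 where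
    D: "\<And>p. p \<in> X \<times> Y \<Longrightarrow> ((\<lambda>(x, y). c x y) has_derivative blinfun_apply (D p)) (at p)" and
    D2: "\<And>p. p \<in> X \<times> Y \<Longrightarrow> (D has_derivative blinfun_apply (D2 p)) (at p)"
      "continuous_on (X \<times> Y) D2"
    using cost_derivatives by metis
  have CK: "cball x1 r \<times> K \<subseteq> X \<times> Y" using r K by auto
  have "bounded (D2 ` (cball x1 r \<times> K))"
    by (intro compact_imp_bounded compact_continuous_image continuous_on_subset[OF D2(2) CK]
        compact_Times compact_cball K)
  then obtain L where L: "L > 0" "\<And>p. p \<in> cball x1 r \<times> K \<Longrightarrow> norm (D2 p) \<le> L"
    unfolding bounded_pos by blast
  have lip: "norm (D (z, y) - D (x, y)) \<le> L * norm (z - x)"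
    if "y \<in> K" "x \<in> cball x1 r" "z \<in> cball x1 r" for x z y
  proof -
    have "norm (D (z, y) - D (x, y)) \<le> L * norm ((z, y) - (x, y))"
    proof (rule differentiable_bound[where S="cball x1 r \<times> {y}" and f'="\<lambda>p. blinfun_apply (D2 p)"])
      show "convex (cball x1 r \<times> {y})" by (intro convex_Times convex_cball convex_singleton)
      fix p assume p: "p \<in> cball x1 r \<times> {y}"
      then have "p \<in> X \<times> Y" using CK that(1) by auto
      then show "(D has_derivative blinfun_apply (D2 p)) (at p within cball x1 r \<times> {y})"
        using D2(1) has_derivative_at_withinI by blast
      have "p \<in> cball x1 r \<times> K" using p that(1) by auto
      then show "onorm (blinfun_apply (D2 p)) \<le> L" using L(2) by (simp add: norm_blinfun.rep_eq[symmetric])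
    qed (use that in auto)
    then show ?thesis by simp
  qed
  moreover have "0 \<le> L" using L(1) by simp
  ultimately show ?thesis using that[OF D] by blast
qed

lemma cost_uniformly_semiconcave:
  assumes r: "cball x1 r \<subseteq> X" and K: "compact K" "K \<subseteq> Y"
  obtains L where "\<And>y. y \<in> K \<Longrightarrow> convex_on (ball x1 r) (\<lambda>x. L * (x \<bullet> x) - c x y)"
proof -
  obtain D :: "'a \<times> 'a \<Rightarrow> (('a \<times> 'a) \<Rightarrow>\<^sub>L real)" and L where
    D: "\<And>p. p \<in> X \<times> Y \<Longrightarrow> ((\<lambda>(x, y). c x y) has_derivative blinfun_apply (D p)) (at p)"
    and L: "L \<ge> 0"
    and lip: "\<And>x z y. y \<in> K \<Longrightarrow> x \<in> cball x1 r \<Longrightarrow> z \<in> cball x1 r \<Longrightarrow>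
      norm (D (z, y) - D (x, y)) \<le> L * norm (z - x)"
    using cost_partial_derivative_lipschitz[OF r K] by blast
  have "convex_on (ball x1 r) (\<lambda>x. L * (x \<bullet> x) - c x y)" if y: "y \<in> K" for y
  proof (rule convex_on_quadratic_minus_if_derivative_bound[where g'="\<lambda>x h. D (x, y) (h, 0)"])
    fix x assume "x \<in> ball x1 r"
    then have "(x, y) \<in> X \<times> Y" using r y K by auto
    then show "((\<lambda>x. c x y) has_derivative (\<lambda>h. D (x, y) (h, 0))) (at x)"
      using has_derivative_partial_first[OF D] by auto
  next
    fix x z assume "x \<in> ball x1 r" "z \<in> ball x1 r"
    then have l: "norm (D (z, y) - D (x, y)) \<le> L * norm (z - x)" using lip[OF y, of x z] by auto
    have "\<bar>(D (z, y) - D (x, y)) (z - x, 0)\<bar> \<le> norm (D (z, y) - D (x, y)) * norm (z - x, 0::'a)"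
      using norm_blinfun by (metis real_norm_def)
    also have "\<dots> \<le> L * norm (z - x) * norm (z - x)"
      using l by (simp add: mult_right_mono)
    finally show "D (z, y) (z - x, 0) - D (x, y) (z - x, 0) \<le> L * norm (z - x)^2"
      by (simp add: blinfun.diff_left power2_eq_square)
  qed (use L in auto)
  then show ?thesis using that by blast
qed

lemma grad_x_eq_partial:
  assumes D: "\<And>p. p \<in> X \<times> Y \<Longrightarrow> ((\<lambda>(x, y). c x y) has_derivative D p) (at p)"
    and "x \<in> X" "y \<in> Y"
  shows "grad_x c x y = (\<lambda>h. D (x, y) (h, 0))"
  unfolding grad_x_def using has_derivative_partial_first[OF D] assms(2,3)
  by (intro frechet_derivative_at[symmetric]) auto

lemma borel_measurable_cost_X: "y \<in> Y \<Longrightarrow> (\<lambda>x. indicator X x * c x y) \<in> borel_measurable borel"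
  using borel_measurable_continuous_on_indicator[OF borel_open[OF open_X] cost_continuous_x] by simp

lemma borel_measurable_cost_Y: "x \<in> X \<Longrightarrow> (\<lambda>y. indicator Y y * c x y) \<in> borel_measurable borel"
  using borel_measurable_continuous_on_indicator[OF borel_open[OF open_Y] cost_continuous_y] by simp

lemma borel_measurable_cost_pair:
  "(\<lambda>p. indicator (X \<times> Y) p * ennreal (c (fst p) (snd p))) \<in> borel_measurable borel"
proof -
  have "open (X \<times> Y)" using open_X open_Y by (simp add: open_Times)
  then have "(\<lambda>p. indicator (X \<times> Y) p * (\<lambda>(x, y). c x y) p) \<in> borel_measurable borel"
    using borel_measurable_continuous_on_indicator[OF borel_open cost_continuous] by simp
  then have "(\<lambda>p. ennreal (indicator (X \<times> Y) p * (\<lambda>(x, y). c x y) p)) \<in> borel_measurable borel"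
    by measurable
  moreover have "ennreal (indicator (X \<times> Y) p * (\<lambda>(x, y). c x y) p)
      = indicator (X \<times> Y) p * ennreal (c (fst p) (snd p))" for p
    by (cases p) (auto simp: indicator_def)
  ultimately show ?thesis by simp
qed

end

section \<open>The c-transform of a bounded continuous function\<close>

locale ctransform_setting = cost_setting +
  fixes \<phi> :: "'a::euclidean_space \<Rightarrow> real" and M :: real
  assumes phi_bound: "\<And>y. y \<in> Y \<Longrightarrow> \<bar>\<phi> y\<bar> \<le> M"
    and phi_continuous: "continuous_on Y \<phi>"
begin

abbreviation \<psi> :: "'a \<Rightarrow> real" where "\<psi> \<equiv> ctrans_Y Y c (\<lambda>y. - \<phi> y)"

lemma M_nonneg: "0 \<le> M"
  using phi_bound[OF y0_in] by linarith

lemma ctrans_eq: "\<psi> x = (INF y\<in>Y. c x y + \<phi> y)"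
  unfolding ctrans_Y_def by simp

lemma bdd_below_cost_plus_phi:
  assumes "x \<in> X" "S \<subseteq> Y"
  shows "bdd_below ((\<lambda>y. c x y + \<phi> y) ` S)"
  using assms cost_nonneg phi_bound by (intro bdd_belowI[of _ "- M"]) (force simp: abs_le_iff)

lemma ctrans_le: "x \<in> X \<Longrightarrow> y \<in> Y \<Longrightarrow> \<psi> x \<le> c x y + \<phi> y"
  unfolding ctrans_eq by (rule cINF_lower[OF bdd_below_cost_plus_phi]) auto

lemma ctrans_lower_bound: "x \<in> X \<Longrightarrow> - M \<le> \<psi> x"
  unfolding ctrans_eq using y0_in cost_nonneg phi_bound
  by (intro cINF_greatest) (force simp: abs_le_iff)+

lemma ctrans_upper_bound: "x \<in> X \<Longrightarrow> \<psi> x \<le> c x y0 + M"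
  using ctrans_le[OF _ y0_in, of x] phi_bound[OF y0_in] by linarith

lemma continuous_on_cost_plus_phi: "x \<in> X \<Longrightarrow> continuous_on Y (\<lambda>y. c x y + \<phi> y)"
  by (intro continuous_intros cost_continuous_y phi_continuous)

lemma cost_plus_phi_coercive:
  assumes C: "compact C" "C \<subseteq> X"
  obtains R where "\<And>x y. x \<in> C \<Longrightarrow> y \<in> Y \<Longrightarrow> R < c x0 y \<Longrightarrow> c x y0 + \<phi> y0 < c x y + \<phi> y"
proof -
  have "bounded ((\<lambda>x. c x y0) ` C)"
    using C by (intro compact_imp_bounded compact_continuous_image
        continuous_on_subset[OF cost_continuous_x[OF y0_in]])
  then obtain Cm where "\<forall>v\<in>(\<lambda>x. c x y0) ` C. norm v \<le> Cm" unfolding bounded_iff by blast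
  then have Cm: "\<And>x. x \<in> C \<Longrightarrow> c x y0 \<le> Cm" by force
  obtain B where B: "B > 0" "\<And>x y. x \<in> X \<Longrightarrow> y \<in> Y \<Longrightarrow> c x0 y \<le> 2 * (c x y + B * c x y0)"
    using cost_growth by blast
  show ?thesis
  proof (rule that[of "2 * (B * Cm + Cm + 2 * M)"])
    fix x y assume x: "x \<in> C" and y: "y \<in> Y" and far: "2 * (B * Cm + Cm + 2 * M) < c x0 y"
    have "B * c x y0 \<le> B * Cm" using Cm[OF x] B(1) by simp
    then have "c x y0 + 2 * M < c x y"
      using B(2)[of x y] x y C Cm[OF x] far by auto
    then show "c x y0 + \<phi> y0 < c x y + \<phi> y"
      using phi_bound[OF y] phi_bound[OF y0_in] by (auto simp: abs_le_iff)
  qed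
qed

lemma ctrans_eq_INF_compact:
  assumes C: "compact C" "C \<subseteq> X"
  obtains K where "compact K" "K \<subseteq> Y" "y0 \<in> K" "\<And>x. x \<in> C \<Longrightarrow> \<psi> x = (INF y\<in>K. c x y + \<phi> y)"
proof -
  obtain R where R: "\<And>x y. x \<in> C \<Longrightarrow> y \<in> Y \<Longrightarrow> R < c x0 y \<Longrightarrow> c x y0 + \<phi> y0 < c x y + \<phi> y"
    using cost_plus_phi_coercive[OF C] by blast
  define K where "K = {y\<in>Y. c x0 y \<le> max R (c x0 y0)}"
  have K: "compact K" "K \<subseteq> Y" "y0 \<in> K"
    using compact_sublevel_Y[OF x0_in] y0_in unfolding K_def by auto
  have "\<psi> x = (INF y\<in>K. c x y + \<phi> y)" if x: "x \<in> C" for x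
    unfolding ctrans_eq
  proof (rule antisym)
    have xX: "x \<in> X" using x C by auto
    show "(INF y\<in>Y. c x y + \<phi> y) \<le> (INF y\<in>K. c x y + \<phi> y)"
      using K bdd_below_cost_plus_phi[OF xX order_refl] by (intro cINF_superset_mono) auto
    have INF_le: "(INF y\<in>K. c x y + \<phi> y) \<le> c x y + \<phi> y" if "y \<in> K" for y
      using bdd_below_cost_plus_phi[OF xX K(2)] that by (rule cINF_lower)
    show "(INF y\<in>K. c x y + \<phi> y) \<le> (INF y\<in>Y. c x y + \<phi> y)"
    proof (rule cINF_greatest)
      fix y assume y: "y \<in> Y"
      show "(INF y\<in>K. c x y + \<phi> y) \<le> c x y + \<phi> y"
      proof (cases "y \<in> K")
        case False
        then have "c x y0 + \<phi> y0 < c x y + \<phi> y" using R[OF x y] y unfolding K_def by auto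
        then show ?thesis using INF_le[OF K(3)] by linarith
      qed (rule INF_le)
    qed (use y0_in in auto)
  qed
  then show ?thesis using that K by blast
qed

lemma ctrans_locally_semiconcave:
  assumes "x1 \<in> X"
  obtains r L where "r > 0" "ball x1 r \<subseteq> X" "convex_on (ball x1 r) (\<lambda>x. L * (x \<bullet> x) - \<psi> x)"
proof -
  \<comment> \<open>Locally \<open>\<psi>\<close> is an infimum over a compact set of uniformly semiconcave functions.\<close>
  obtain r where r: "r > 0" "cball x1 r \<subseteq> X" using open_X assms open_contains_cball by blast
  obtain K where K: "compact K" "K \<subseteq> Y" "y0 \<in> K"
    and \<psi>_eq: "\<And>x. x \<in> cball x1 r \<Longrightarrow> \<psi> x = (INF y\<in>K. c x y + \<phi> y)"
    using ctrans_eq_INF_compact[OF compact_cball r(2)] by blast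
  obtain L where L: "\<And>y. y \<in> K \<Longrightarrow> convex_on (ball x1 r) (\<lambda>x. L * (x \<bullet> x) - c x y)"
    using cost_uniformly_semiconcave[OF r(2) K(1,2)] by blast
  have "convex_on (ball x1 r) (\<lambda>x. SUP y\<in>K. L * (x \<bullet> x) - (c x y + \<phi> y))"
  proof (rule convex_on_cSUP)
    fix y assume "y \<in> K"
    from convex_on_add[OF L[OF this] convex_on_const[THEN iffD2, OF convex_ball, of x1 r "- \<phi> y"]]
    show "convex_on (ball x1 r) (\<lambda>x. L * (x \<bullet> x) - (c x y + \<phi> y))"
      by (rule convex_on_cong_pointwise) simp
  next
    fix x assume "x \<in> ball x1 r"
    then have "x \<in> X" using r by auto
    then show "bdd_above ((\<lambda>y. L * (x \<bullet> x) - (c x y + \<phi> y)) ` K)"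
      using ctrans_le K(2) by (intro bdd_aboveI[of _ "L * (x \<bullet> x) - \<psi> x"]) force
  qed (use K in auto)
  moreover have "(SUP y\<in>K. L * (x \<bullet> x) - (c x y + \<phi> y)) = L * (x \<bullet> x) - \<psi> x"
    if "x \<in> ball x1 r" for x
  proof -
    have xX: "x \<in> X" using that r by auto
    have "K \<noteq> {}" using K(3) by auto
    from diff_cINF_eq_cSUP[OF bdd_below_cost_plus_phi[OF xX K(2)] this, of "L * (x \<bullet> x)"]
    show ?thesis using \<psi>_eq[of x] that by simp
  qed
  ultimately have "convex_on (ball x1 r) (\<lambda>x. L * (x \<bullet> x) - \<psi> x)"
    by (rule convex_on_cong_pointwise)
  moreover have "ball x1 r \<subseteq> X" using r(2) by auto
  ultimately show ?thesis using that r(1) by blast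
qed

lemma ctrans_continuous: "continuous_on X \<psi>"
  unfolding continuous_on_eq_continuous_at[OF open_X]
proof
  fix x assume "x \<in> X"
  then obtain r L where r: "r > 0" "ball x r \<subseteq> X" "convex_on (ball x r) (\<lambda>x. L * (x \<bullet> x) - \<psi> x)"
    by (rule ctrans_locally_semiconcave)
  then have "continuous_on (ball x r) \<psi>" by (intro continuous_on_if_semiconcave[OF r(3)]) simp
  then show "isCont \<psi> x" using r(1) by (simp add: continuous_on_eq_continuous_at)
qed

lemma ctrans_ae_differentiable: "\<exists>N\<in>null_sets lborel. \<forall>x\<in>X - N. \<psi> differentiable (at x)"
proof (rule ae_differentiable_if_locally_ae_differentiable)
  fix x assume "x \<in> X"
  then obtain r L where r: "r > 0" "ball x r \<subseteq> X" "convex_on (ball x r) (\<lambda>x. L * (x \<bullet> x) - \<psi> x)"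
    by (rule ctrans_locally_semiconcave)
  then show "\<exists>U. open U \<and> x \<in> U \<and> (\<exists>N\<in>null_sets lborel. \<forall>z\<in>U - N. \<psi> differentiable (at z))"
    using ae_differentiable_if_semiconcave[OF r(3)] by (intro exI[of _ "ball x r"]) auto
qed

section \<open>The optimal map\<close>

lemma ctrans_attained_in_closed:
  assumes x: "x \<in> X" and F: "closed F"
    and approx: "\<And>\<epsilon>. \<epsilon> > 0 \<Longrightarrow> \<exists>y\<in>F \<inter> Y. c x y + \<phi> y < \<psi> x + \<epsilon>"
  shows "\<exists>y\<in>F \<inter> Y. \<psi> x = c x y + \<phi> y"
proof -
  define S where "S = {y\<in>Y. c x y \<le> \<psi> x + 1 + M} \<inter> F"
  have "compact S" unfolding S_def using compact_sublevel_Y[OF x] F by (intro compact_Int_closed)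
  have inS: "y \<in> S" if "y \<in> F \<inter> Y" "c x y + \<phi> y < \<psi> x + \<epsilon>" "\<epsilon> \<le> 1" for y \<epsilon>
    using that phi_bound[of y] unfolding S_def by (auto simp: abs_le_iff)
  obtain y1 where "y1 \<in> F \<inter> Y" "c x y1 + \<phi> y1 < \<psi> x + 1" using approx[of 1] by auto
  then have "S \<noteq> {}" using inS by blast
  moreover have "continuous_on S (\<lambda>y. c x y + \<phi> y)"
    by (rule continuous_on_subset[OF continuous_on_cost_plus_phi[OF x]]) (auto simp: S_def)
  ultimately obtain ys where ys: "ys \<in> S" "\<And>y. y \<in> S \<Longrightarrow> c x ys + \<phi> ys \<le> c x y + \<phi> y"
    using continuous_attains_inf[OF \<open>compact S\<close>] by blast
  have "c x ys + \<phi> ys \<le> \<psi> x"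
  proof (rule ccontr)
    define \<epsilon> where "\<epsilon> = min 1 (c x ys + \<phi> ys - \<psi> x)"
    assume "\<not> c x ys + \<phi> ys \<le> \<psi> x"
    then have "\<epsilon> > 0" unfolding \<epsilon>_def by simp
    then obtain y where y: "y \<in> F \<inter> Y" "c x y + \<phi> y < \<psi> x + \<epsilon>" using approx by blast
    moreover have "\<epsilon> \<le> 1" "\<epsilon> \<le> c x ys + \<phi> ys - \<psi> x" unfolding \<epsilon>_def by auto
    ultimately show False using ys(2)[OF inS[OF y]] by linarith
  qed
  moreover have "ys \<in> F \<inter> Y" using ys(1) unfolding S_def by auto
  ultimately show ?thesis using ctrans_le[OF x] by force
qed

lemma ctrans_attained:
  assumes x: "x \<in> X"
  shows "\<exists>y\<in>Y. \<psi> x = c x y + \<phi> y"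
proof -
  have "\<exists>y\<in>UNIV \<inter> Y. c x y + \<phi> y < \<psi> x + \<epsilon>" if "\<epsilon> > 0" for \<epsilon>
  proof -
    have "(INF y\<in>Y. c x y + \<phi> y) < \<psi> x + \<epsilon>" using that by (simp add: ctrans_eq)
    then show ?thesis using cINF_less_iff[OF _ bdd_below_cost_plus_phi[OF x order_refl]] y0_in by auto
  qed
  then show ?thesis using ctrans_attained_in_closed[OF x closed_UNIV] by auto
qed

lemma Tmap_eq_minimizer:
  assumes x: "x \<in> X" and diff: "\<psi> differentiable (at x)"
    and y: "y \<in> Y" and min: "\<psi> x = c x y + \<phi> y"
  shows "Tmap Y c \<psi> x = y"
proof -
  \<comment> \<open>First-order condition at the minimum \<open>x\<close> of \<open>x' \<mapsto> c x' y + \<phi> y - \<psi> x'\<close>, then the twist.\<close>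
  obtain D :: "'a \<times> 'a \<Rightarrow> (('a \<times> 'a) \<Rightarrow>\<^sub>L real)" where
    D: "\<And>p. p \<in> X \<times> Y \<Longrightarrow> ((\<lambda>(x, y). c x y) has_derivative blinfun_apply (D p)) (at p)"
    using cost_derivatives by metis
  have "((\<lambda>x'. c x' y + \<phi> y - \<psi> x') has_derivative
      (\<lambda>h. D (x, y) (h, 0) - frechet_derivative \<psi> (at x) h)) (at x)"
    using has_derivative_partial_first[OF D] x y diff frechet_derivative_works
    by (auto intro!: derivative_eq_intros)
  moreover have "eventually (\<lambda>x'. c x y + \<phi> y - \<psi> x \<le> c x' y + \<phi> y - \<psi> x') (at x)"
    using eventually_at_in_open'[OF open_X x] by eventually_elim (use min ctrans_le y in auto)
  ultimately have "(\<lambda>h. D (x, y) (h, 0) - frechet_derivative \<psi> (at x) h) = (\<lambda>h. 0)"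
    by (rule has_derivative_local_min)
  then have "grad_x c x y = frechet_derivative \<psi> (at x)"
    using grad_x_eq_partial[OF D x y] by (auto simp: fun_eq_iff)
  then show ?thesis
    unfolding Tmap_def
  proof (intro the_equality conjI y)
    fix y' assume y': "y' \<in> Y \<and> grad_x c x y' = frechet_derivative \<psi> (at x)"
    then have "grad_x c x y' = grad_x c x y" using \<open>grad_x c x y = _\<close> by simp
    from inj_onD[OF twist[OF x] this] y' y show "y' = y" by simp
  qed
qed

lemma minimizer_in_closed_iff_countable:
  assumes F: "closed F" and FY: "F \<inter> Y \<noteq> {}"
  obtains D where "countable D" "D \<subseteq> F \<inter> Y" "D \<noteq> {}"
    "\<And>x. x \<in> X \<Longrightarrow> (\<exists>y\<in>F \<inter> Y. \<psi> x = c x y + \<phi> y) \<longleftrightarrow> (INF d\<in>D. c x d + \<phi> d) \<le> \<psi> x"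
proof -
  \<comment> \<open>By continuity, the infimum over a countable dense subset of \<open>F \<inter> Y\<close> is the one over \<open>F \<inter> Y\<close>.\<close>
  obtain D where D: "countable D" "D \<subseteq> F \<inter> Y" "F \<inter> Y \<subseteq> closure D"
    using separable by blast
  have D_ne: "D \<noteq> {}" using D(3) FY by auto
  have DY: "D \<subseteq> Y" using D(2) by blast
  have bdd: "bdd_below ((\<lambda>d. c x d + \<phi> d) ` D)" if "x \<in> X" for x
    by (rule bdd_below_cost_plus_phi[OF that DY])
  have "(\<exists>y\<in>F \<inter> Y. \<psi> x = c x y + \<phi> y) \<longleftrightarrow> (INF d\<in>D. c x d + \<phi> d) \<le> \<psi> x" if x: "x \<in> X" for x
  proof
    assume "\<exists>y\<in>F \<inter> Y. \<psi> x = c x y + \<phi> y"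
    then obtain y where y: "y \<in> F \<inter> Y" "\<psi> x = c x y + \<phi> y" by blast
    have "(INF d\<in>D. c x d + \<phi> d) \<le> c x y + \<phi> y + \<epsilon>" if "\<epsilon> > 0" for \<epsilon>
    proof -
      obtain \<delta> where \<delta>: "\<delta> > 0"
        "\<And>y'. y' \<in> Y \<Longrightarrow> dist y' y < \<delta> \<Longrightarrow> dist (c x y' + \<phi> y') (c x y + \<phi> y) < \<epsilon>"
        using continuous_on_cost_plus_phi[OF x] y(1) \<open>\<epsilon> > 0\<close> unfolding continuous_on_iff by blast
      obtain d where d: "d \<in> D" "dist d y < \<delta>"
        using D(3) y(1) \<delta>(1) by (meson closure_approachable subsetD)
      have "(INF d\<in>D. c x d + \<phi> d) \<le> c x d + \<phi> d" using bdd[OF x] d(1) by (rule cINF_lower)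
      also have "\<dots> \<le> c x y + \<phi> y + \<epsilon>" using \<delta>(2)[of d] d D(2) by (auto simp: dist_real_def)
      finally show ?thesis .
    qed
    then show "(INF d\<in>D. c x d + \<phi> d) \<le> \<psi> x" using y(2) by (metis field_le_epsilon)
  next
    assume le: "(INF d\<in>D. c x d + \<phi> d) \<le> \<psi> x"
    show "\<exists>y\<in>F \<inter> Y. \<psi> x = c x y + \<phi> y"
    proof (rule ctrans_attained_in_closed[OF x F])
      fix \<epsilon> :: real assume "\<epsilon> > 0"
      then have "(INF d\<in>D. c x d + \<phi> d) < \<psi> x + \<epsilon>" using le by linarith
      then show "\<exists>y\<in>F \<inter> Y. c x y + \<phi> y < \<psi> x + \<epsilon>"
        using cINF_less_iff[OF D_ne bdd[OF x]] D(2) by blast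
    qed
  qed
  then show ?thesis using that D(1,2) D_ne by blast
qed

text \<open>The map \<open>transport\<close> is \<open>Tmap\<close> off a Borel null set outside which \<open>\<psi>\<close> is differentiable
  (the set of non-differentiability points itself is not shown to be Borel); elsewhere the junk
  value \<open>y0\<close> keeps it \<open>Y\<close>-valued.\<close>

definition nondiff_null :: "'a set" where
  "nondiff_null = (SOME N. N \<in> null_sets lborel \<and> (\<forall>x\<in>X - N. \<psi> differentiable (at x)))"

definition transport :: "'a \<Rightarrow> 'a" where
  "transport x = (if x \<in> X - nondiff_null then Tmap Y c \<psi> x else y0)"

lemma nondiff_null: "nondiff_null \<in> null_sets lborel"
  and differentiable_off_nondiff_null: "x \<in> X - nondiff_null \<Longrightarrow> \<psi> differentiable (at x)"
proof -
  from ctrans_ae_differentiable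
  have "\<exists>N. N \<in> null_sets lborel \<and> (\<forall>x\<in>X - N. \<psi> differentiable (at x))" by blast
  from someI_ex[OF this] show "nondiff_null \<in> null_sets lborel"
    and "x \<in> X - nondiff_null \<Longrightarrow> \<psi> differentiable (at x)"
    unfolding nondiff_null_def by blast+
qed

lemma transport_minimizes:
  assumes "x \<in> X - nondiff_null"
  shows "transport x \<in> Y" "\<psi> x = c x (transport x) + \<phi> (transport x)"
proof -
  obtain y where "y \<in> Y" "\<psi> x = c x y + \<phi> y" using ctrans_attained assms by blast
  moreover have "transport x = y"
    using Tmap_eq_minimizer[OF _ differentiable_off_nondiff_null[OF assms]] assms calculation
    unfolding transport_def by simp
  ultimately show "transport x \<in> Y" "\<psi> x = c x (transport x) + \<phi> (transport x)" by auto
qed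

lemma transport_in_Y: "transport x \<in> Y"
  using transport_minimizes(1)[of x] y0_in unfolding transport_def by auto

lemma transport_in_iff_minimizer_in:
  assumes x: "x \<in> X - nondiff_null"
  shows "transport x \<in> F \<longleftrightarrow> (\<exists>y\<in>F \<inter> Y. \<psi> x = c x y + \<phi> y)"
proof
  assume "transport x \<in> F"
  then show "\<exists>y\<in>F \<inter> Y. \<psi> x = c x y + \<phi> y" using transport_minimizes[OF x] by blast
next
  assume "\<exists>y\<in>F \<inter> Y. \<psi> x = c x y + \<phi> y"
  then obtain y where y: "y \<in> F" "y \<in> Y" "\<psi> x = c x y + \<phi> y" by blast
  have "transport x = Tmap Y c \<psi> x" using x unfolding transport_def by simp
  also have "\<dots> = y"
    using x by (intro Tmap_eq_minimizer[OF _ differentiable_off_nondiff_null[OF x] y(2,3)]) simp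
  finally show "transport x \<in> F" using y(1) by simp
qed

lemma borel_measurable_ctrans: "(\<lambda>x. indicator X x * \<psi> x) \<in> borel_measurable borel"
  using borel_measurable_continuous_on_indicator[OF borel_open[OF open_X] ctrans_continuous] by simp

lemma sets_transport_in_closed:
  assumes F: "closed F"
  shows "{x\<in>X - nondiff_null. transport x \<in> F} \<in> sets borel"
proof (cases "F \<inter> Y = {}")
  case True
  then have "{x\<in>X - nondiff_null. transport x \<in> F} = {}" using transport_in_Y by blast
  then show ?thesis by (simp only: sets.empty_sets)
next
  case False
  show ?thesis
  proof (rule minimizer_in_closed_iff_countable[OF F False])
    fix D assume D: "countable D" "D \<subseteq> F \<inter> Y" "D \<noteq> {}"
      and D_iff: "\<And>x. x \<in> X \<Longrightarrow> (\<exists>y\<in>F \<inter> Y. \<psi> x = c x y + \<phi> y) \<longleftrightarrow> (INF d\<in>D. c x d + \<phi> d) \<le> \<psi> x"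
    define g where "g x = (INF d\<in>D. indicator X x * c x d + \<phi> d)" for x
    have "transport x \<in> F \<longleftrightarrow> g x \<le> indicator X x * \<psi> x" if x: "x \<in> X - nondiff_null" for x
      using transport_in_iff_minimizer_in[OF x] D_iff[of x] x unfolding g_def by simp
    then have "{x\<in>X - nondiff_null. transport x \<in> F}
        = (X - nondiff_null) \<inter> {x \<in> space borel. g x \<le> indicator X x * \<psi> x}"
      unfolding space_borel by blast
    moreover have "g \<in> borel_measurable borel"
      unfolding g_def using D(1,2) borel_measurable_cost_X by (intro borel_measurable_cINF_real) auto
    then have "{x \<in> space borel. g x \<le> indicator X x * \<psi> x} \<in> sets borel"
      using borel_measurable_ctrans by (rule borel_measurable_le)
    moreover have "X - nondiff_null \<in> sets borel" using nondiff_null open_X by auto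
    ultimately show ?thesis by (simp only: sets.Int)
  qed
qed

lemma borel_measurable_transport: "transport \<in> borel_measurable borel"
proof (rule borel_measurableI)
  fix S :: "'a set" assume "open S"
  have XN: "X - nondiff_null \<in> sets borel" using nondiff_null open_X by auto
  have "transport -` (- S) = {x\<in>X - nondiff_null. transport x \<in> - S} \<union>
      (if y0 \<in> - S then - (X - nondiff_null) else {})"
    unfolding transport_def by (auto split: if_splits)
  moreover have "{x\<in>X - nondiff_null. transport x \<in> - S} \<in> sets borel"
    using \<open>open S\<close> by (intro sets_transport_in_closed) auto
  moreover have "- (X - nondiff_null) \<in> sets borel" using borel_comp[OF XN] .
  ultimately have "transport -` (- S) \<in> sets borel"
    by (cases "y0 \<in> - S") (simp_all only: if_True if_False sets.Un sets.empty_sets Un_empty_right)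
  moreover have "transport -` S \<inter> space borel = - (transport -` (- S))" by auto
  ultimately show "transport -` S \<inter> space borel \<in> sets borel" using borel_comp by simp
qed

lemma transport_cost_bound:
  obtains B where "\<And>x. x \<in> X - nondiff_null \<Longrightarrow> c x0 (transport x) \<le> 2 * (1 + B) * c x y0 + 4 * M"
proof -
  obtain B where B: "B > 0" "\<And>x y. x \<in> X \<Longrightarrow> y \<in> Y \<Longrightarrow> c x0 y \<le> 2 * (c x y + B * c x y0)"
    using cost_growth by blast
  have "c x0 (transport x) \<le> 2 * (1 + B) * c x y0 + 4 * M" if x: "x \<in> X - nondiff_null" for x
  proof -
    have "c x (transport x) \<le> c x y0 + 2 * M"
      using transport_minimizes[OF x] ctrans_upper_bound[of x] phi_bound[OF transport_in_Y[of x]] x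
      by (auto simp: abs_le_iff)
    then show ?thesis using B(2)[of x "transport x"] x transport_in_Y by (simp add: algebra_simps)
  qed
  then show ?thesis by (rule that)
qed

lemma borel_measurable_phi_transport: "(\<lambda>x. \<phi> (transport x)) \<in> borel_measurable borel"
proof -
  have "(\<lambda>y. indicator Y y * \<phi> y) \<in> borel_measurable borel"
    using borel_measurable_continuous_on_indicator[OF borel_open[OF open_Y] phi_continuous] by simp
  from measurable_compose[OF borel_measurable_transport this] show ?thesis
    using transport_in_Y by simp
qed

end

section \<open>The transported measure solves the dual problem\<close>

locale ot_setting = ctransform_setting +
  fixes \<mu> :: "'a measure"
  assumes mu: "\<mu> \<in> Pcost_AC_X X c y0"
begin

lemma mu_prob_on: "prob_on X \<mu>"
  and mu_cost_integrable: "set_integrable \<mu> X (\<lambda>x. c x y0)"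
  and mu_abs_cont: "null_sets lborel \<subseteq> null_sets \<mu>"
  using mu unfolding Pcost_AC_X_def Pcost_X_def absolutely_continuous_def by auto

lemma mu_prob_space: "prob_space \<mu>"
  using mu_prob_on unfolding prob_on_def by auto

sublocale mu: prob_space \<mu> by (rule mu_prob_space)

lemma mu_sets: "sets \<mu> = sets borel"
  using mu_prob_on unfolding prob_on_def by auto

lemma borel_measurable_mu: "f \<in> borel_measurable borel \<Longrightarrow> f \<in> borel_measurable \<mu>"
  using measurable_cong_sets[OF mu_sets refl] by blast

lemma AE_differentiable_point: "AE x in \<mu>. x \<in> X - nondiff_null"
proof -
  have "AE x in \<mu>. x \<notin> nondiff_null" using mu_abs_cont nondiff_null by (intro AE_not_in) auto
  moreover have "AE x in \<mu>. x \<in> X" using AE_in_prob_on[OF mu_prob_on] open_X by auto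
  ultimately show ?thesis by eventually_elim auto
qed

lemma ctrans_set_integrable: "set_integrable \<mu> X \<psi>"
  unfolding set_integrable_def
proof (rule Bochner_Integration.integrable_bound[where f="\<lambda>x. indicator X x * c x y0 + M"])
  show "integrable \<mu> (\<lambda>x. indicator X x * c x y0 + M)"
    using mu_cost_integrable unfolding set_integrable_def by simp
  show "(\<lambda>x. indicator X x *\<^sub>R \<psi> x) \<in> borel_measurable \<mu>"
    using borel_measurable_ctrans borel_measurable_mu by simp
  have "norm (indicator X x *\<^sub>R \<psi> x) \<le> norm (indicator X x * c x y0 + M)" for x
  proof (cases "x \<in> X")
    case True
    then have "- M \<le> \<psi> x" "\<psi> x \<le> c x y0 + M" "0 \<le> c x y0"
      using ctrans_lower_bound ctrans_upper_bound cost_nonneg[OF _ y0_in] by auto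
    then show ?thesis using True M_nonneg by (simp add: abs_le_iff)
  qed (simp add: M_nonneg)
  then show "AE x in \<mu>. norm (indicator X x *\<^sub>R \<psi> x) \<le> norm (indicator X x * c x y0 + M)"
    by simp
qed

lemma ctrans_integral_le:
  assumes "\<nu> \<in> Pcost_Y Y c x0"
  shows "ereal (LINT x:X|\<mu>. \<psi> x) \<le> ereal (LINT y:Y|\<nu>. \<phi> y) + enn2ereal (Kc X Y c \<mu> \<nu>)"
proof -
  have \<nu>: "prob_on Y \<nu>" using assms unfolding Pcost_Y_def by auto
  have "prob_space \<nu>" using \<nu> unfolding prob_on_def by blast
  then interpret \<nu>: prob_space \<nu> .
  have \<nu>_sets: "sets \<nu> = sets borel" using \<nu> unfolding prob_on_def by auto
  have \<phi>_meas: "(\<lambda>y. indicator Y y * \<phi> y) \<in> borel_measurable borel"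
    using borel_measurable_continuous_on_indicator[OF borel_open[OF open_Y] phi_continuous] by simp
  have "set_integrable \<nu> Y \<phi>"
    unfolding set_integrable_def
  proof (rule Bochner_Integration.integrable_bound[where f="\<lambda>x. M"])
    show "(\<lambda>y. indicator Y y *\<^sub>R \<phi> y) \<in> borel_measurable \<nu>"
      unfolding measurable_cong_sets[OF \<nu>_sets refl] using \<phi>_meas by simp
    have "norm (indicator Y y *\<^sub>R \<phi> y) \<le> norm M" for y
      using phi_bound[of y] M_nonneg by (cases "y \<in> Y") auto
    then show "AE y in \<nu>. norm (indicator Y y *\<^sub>R \<phi> y) \<le> norm M" by simp
  qed (rule \<nu>.integrable_const)
  moreover have "- M \<le> \<phi> y" if "y \<in> Y" for y using phi_bound[OF that] by linarith
  ultimately show ?thesis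
    using borel_open[OF open_X] borel_open[OF open_Y]
    by (intro set_integral_le_Kc[OF mu_prob_on \<nu>, where m="- M"] borel_measurable_ctrans
        ctrans_set_integrable ctrans_lower_bound \<phi>_meas borel_measurable_cost_pair ctrans_le cost_nonneg)
      auto
qed


definition transported :: "'a measure" where
  "transported = distr \<mu> borel transport"

definition transport_plan :: "('a \<times> 'a) measure" where
  "transport_plan = distr \<mu> borel (\<lambda>x. (x, transport x))"

lemma measurable_transport_mu: "transport \<in> measurable \<mu> borel"
  using borel_measurable_mu[OF borel_measurable_transport] .

lemma measurable_transport_graph: "(\<lambda>x. (x, transport x)) \<in> measurable \<mu> (borel :: ('a \<times> 'a) measure)"
  using measurable_transport_mu by (intro borel_measurable_Pair) (auto intro: borel_measurable_mu)

lemma borel_measurable_indicator_phi_transport: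
  "(\<lambda>x. indicator X x * \<phi> (transport x)) \<in> borel_measurable \<mu>"
  using borel_measurable_times[OF borel_measurable_indicator[OF borel_open[OF open_X]]
      borel_measurable_phi_transport]
  by (rule borel_measurable_mu)

lemma integrable_phi_transport: "integrable \<mu> (\<lambda>x. indicator X x * \<phi> (transport x))"
proof (rule Bochner_Integration.integrable_bound[where f="\<lambda>x. M"])
  show "(\<lambda>x. indicator X x * \<phi> (transport x)) \<in> borel_measurable \<mu>"
    by (rule borel_measurable_indicator_phi_transport)
  have "norm (indicator X x * \<phi> (transport x)) \<le> norm M" for x
    using phi_bound[OF transport_in_Y[of x]] M_nonneg by (cases "x \<in> X") auto
  then show "AE x in \<mu>. norm (indicator X x * \<phi> (transport x)) \<le> norm M" by simp
qed simp

lemma transported_Pcost: "transported \<in> Pcost_Y Y c x0"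
  unfolding Pcost_Y_def prob_on_def
proof (intro CollectI conjI)
  show "prob_space transported"
    unfolding transported_def by (rule mu.prob_space_distr[OF measurable_transport_mu])
  show "sets transported = sets borel" unfolding transported_def by simp
  have "emeasure transported (UNIV - Y) = emeasure \<mu> (transport -` (UNIV - Y) \<inter> space \<mu>)"
    unfolding transported_def using open_Y by (intro emeasure_distr[OF measurable_transport_mu]) auto
  also have "transport -` (UNIV - Y) \<inter> space \<mu> = {}" using transport_in_Y by auto
  finally show "emeasure transported (space transported - Y) = 0" unfolding transported_def by simp
  obtain B where B: "\<And>x. x \<in> X - nondiff_null \<Longrightarrow> c x0 (transport x) \<le> 2 * (1 + B) * c x y0 + 4 * M"
    using transport_cost_bound by metis
  have "integrable \<mu> (\<lambda>x. indicator Y (transport x) * c x0 (transport x))"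
  proof (rule Bochner_Integration.integrable_bound
      [where f="\<lambda>x. 2 * (1 + B) * (indicator X x * c x y0) + 4 * M"])
    show "integrable \<mu> (\<lambda>x. 2 * (1 + B) * (indicator X x * c x y0) + 4 * M)"
      using mu_cost_integrable unfolding set_integrable_def by simp
    show "(\<lambda>x. indicator Y (transport x) * c x0 (transport x)) \<in> borel_measurable \<mu>"
      using measurable_compose[OF measurable_transport_mu borel_measurable_cost_Y[OF x0_in]] .
    show "AE x in \<mu>. norm (indicator Y (transport x) * c x0 (transport x))
        \<le> norm (2 * (1 + B) * (indicator X x * c x y0) + 4 * M)"
      using AE_differentiable_point
    proof eventually_elim
      case (elim x)
      then have "c x0 (transport x) \<le> 2 * (1 + B) * (indicator X x * c x y0) + 4 * M"
        using B by simp
      moreover have "0 \<le> c x0 (transport x)" using cost_nonneg[OF x0_in transport_in_Y] .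
      ultimately show ?case using transport_in_Y[of x] by simp
    qed
  qed
  then show "set_integrable transported Y (\<lambda>y. c x0 y)"
    unfolding set_integrable_def transported_def
    by (subst integrable_distr_eq[OF measurable_transport_mu])
      (use borel_measurable_cost_Y[OF x0_in] in auto)
qed

lemma transport_plan_coupling: "transport_plan \<in> couplings \<mu> transported"
  unfolding couplings_def
proof (intro CollectI conjI)
  show "prob_space transport_plan"
    unfolding transport_plan_def by (rule mu.prob_space_distr[OF measurable_transport_graph])
  show "sets transport_plan = sets (borel :: ('a \<times> 'a) measure)" unfolding transport_plan_def by simp
  have "distr transport_plan borel fst = distr \<mu> borel (fst \<circ> (\<lambda>x. (x, transport x)))"
    unfolding transport_plan_def by (intro distr_distr borel_measurable_fst_snd measurable_transport_graph)
  also have "\<dots> = \<mu>" by (simp add: o_def distr_id2 mu_sets)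
  finally show "distr transport_plan borel fst = \<mu>" .
  have "distr transport_plan borel snd = distr \<mu> borel (snd \<circ> (\<lambda>x. (x, transport x)))"
    unfolding transport_plan_def by (intro distr_distr borel_measurable_fst_snd measurable_transport_graph)
  then show "distr transport_plan borel snd = transported" by (simp add: o_def transported_def)
qed

lemma cost_transport_nonneg: "AE x in \<mu>. 0 \<le> indicator X x * \<psi> x - indicator X x * \<phi> (transport x)"
  using AE_differentiable_point
proof eventually_elim
  case (elim x)
  then show ?case using transport_minimizes[OF elim] cost_nonneg[OF _ transport_in_Y] by simp
qed

lemma transport_plan_cost:
  "(\<integral>\<^sup>+ p. indicator (X \<times> Y) p * ennreal (c (fst p) (snd p)) \<partial>transport_plan)
    = ennreal (\<integral>x. indicator X x * \<psi> x - indicator X x * \<phi> (transport x) \<partial>\<mu>)"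
proof -
  have "(\<integral>\<^sup>+ p. indicator (X \<times> Y) p * ennreal (c (fst p) (snd p)) \<partial>transport_plan)
      = (\<integral>\<^sup>+ x. indicator (X \<times> Y) (x, transport x) * ennreal (c x (transport x)) \<partial>\<mu>)"
    unfolding transport_plan_def
    by (subst nn_integral_distr[OF measurable_transport_graph]) (use borel_measurable_cost_pair in auto)
  also have "\<dots> = (\<integral>\<^sup>+ x. ennreal (indicator X x * \<psi> x - indicator X x * \<phi> (transport x)) \<partial>\<mu>)"
    using AE_differentiable_point
  proof (rule nn_integral_cong_AE[OF AE_mp, OF _ AE_I2], intro impI)
    fix x assume "x \<in> X - nondiff_null"
    then show "indicator (X \<times> Y) (x, transport x) * ennreal (c x (transport x))
        = ennreal (indicator X x * \<psi> x - indicator X x * \<phi> (transport x))"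
      using transport_minimizes transport_in_Y by simp
  qed
  also have "\<dots> = ennreal (\<integral>x. indicator X x * \<psi> x - indicator X x * \<phi> (transport x) \<partial>\<mu>)"
    using ctrans_set_integrable integrable_phi_transport cost_transport_nonneg
    unfolding set_integrable_def by (intro nn_integral_eq_integral) auto
  finally show ?thesis .
qed

lemma transported_attains:
  "ereal (LINT y:Y|transported. \<phi> y) + enn2ereal (Kc X Y c \<mu> transported) = ereal (LINT x:X|\<mu>. \<psi> x)"
proof (rule antisym)
  define I where "I = (\<integral>x. indicator X x * \<psi> x - indicator X x * \<phi> (transport x) \<partial>\<mu>)"
  have "0 \<le> I" unfolding I_def using cost_transport_nonneg by (rule integral_nonneg_AE)
  have "Kc X Y c \<mu> transported \<le> ennreal I"
    unfolding Kc_def I_def transport_plan_cost[symmetric] using transport_plan_coupling by (rule INF_lower)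
  then have K: "enn2ereal (Kc X Y c \<mu> transported) \<le> ereal I"
    using \<open>0 \<le> I\<close> by (simp add: less_eq_ennreal.rep_eq)
  have L: "(LINT y:Y|transported. \<phi> y) = (\<integral>x. indicator X x * \<phi> (transport x) \<partial>\<mu>)"
  proof -
    have "(LINT y:Y|transported. \<phi> y) = (\<integral>x. indicator Y (transport x) * \<phi> (transport x) \<partial>\<mu>)"
      unfolding set_lebesgue_integral_def transported_def
      using borel_measurable_continuous_on_indicator[OF borel_open[OF open_Y] phi_continuous]
      by (simp add: integral_distr[OF measurable_transport_mu])
    also have "\<dots> = (\<integral>x. indicator X x * \<phi> (transport x) \<partial>\<mu>)"
    proof (rule integral_cong_AE)
      show "(\<lambda>x. indicator Y (transport x) * \<phi> (transport x)) \<in> borel_measurable \<mu>"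
        using borel_measurable_mu[OF borel_measurable_phi_transport] transport_in_Y by simp
      show "AE x in \<mu>. indicator Y (transport x) * \<phi> (transport x) = indicator X x * \<phi> (transport x)"
        using AE_differentiable_point by eventually_elim (simp add: transport_in_Y)
    qed (rule borel_measurable_indicator_phi_transport)
    finally show ?thesis .
  qed
  have F: "(LINT x:X|\<mu>. \<psi> x) = (\<integral>x. indicator X x * \<phi> (transport x) \<partial>\<mu>) + I"
    unfolding I_def set_lebesgue_integral_def
    using ctrans_set_integrable integrable_phi_transport unfolding set_integrable_def by simp
  have "ereal (LINT y:Y|transported. \<phi> y) + enn2ereal (Kc X Y c \<mu> transported)
      \<le> ereal (\<integral>x. indicator X x * \<phi> (transport x) \<partial>\<mu>) + ereal I"
    unfolding L by (rule add_left_mono[OF K])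
  also have "\<dots> = ereal (LINT x:X|\<mu>. \<psi> x)" unfolding F by simp
  finally show "ereal (LINT y:Y|transported. \<phi> y) + enn2ereal (Kc X Y c \<mu> transported)
      \<le> ereal (LINT x:X|\<mu>. \<psi> x)" .
  show "ereal (LINT x:X|\<mu>. \<psi> x) \<le> ereal (LINT y:Y|transported. \<phi> y) + enn2ereal (Kc X Y c \<mu> transported)"
    by (rule ctrans_integral_le[OF transported_Pcost])
qed

lemma INF_dual_eq_ctrans_integral:
  "(INF \<nu>\<in>Pcost_Y Y c x0. ereal (LINT y:Y|\<nu>. \<phi> y) + enn2ereal (Kc X Y c \<mu> \<nu>))
    = ereal (LINT x:X|\<mu>. \<psi> x)"
proof (rule antisym)
  have "(INF \<nu>\<in>Pcost_Y Y c x0. ereal (LINT y:Y|\<nu>. \<phi> y) + enn2ereal (Kc X Y c \<mu> \<nu>))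
      \<le> ereal (LINT y:Y|transported. \<phi> y) + enn2ereal (Kc X Y c \<mu> transported)"
    by (rule INF_lower[OF transported_Pcost])
  then show "(INF \<nu>\<in>Pcost_Y Y c x0. ereal (LINT y:Y|\<nu>. \<phi> y) + enn2ereal (Kc X Y c \<mu> \<nu>))
      \<le> ereal (LINT x:X|\<mu>. \<psi> x)"
    unfolding transported_attains .
  show "ereal (LINT x:X|\<mu>. \<psi> x)
      \<le> (INF \<nu>\<in>Pcost_Y Y c x0. ereal (LINT y:Y|\<nu>. \<phi> y) + enn2ereal (Kc X Y c \<mu> \<nu>))"
    by (rule INF_greatest) (rule ctrans_integral_le)
qed

lemma AE_ctrans_differentiable: "AE x in \<mu>. \<psi> differentiable (at x)"
  using AE_differentiable_point by eventually_elim (rule differentiable_off_nondiff_null)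

lemma AE_transport_eq_Tmap: "AE x in \<mu>. transport x = Tmap Y c \<psi> x"
  using AE_differentiable_point by eventually_elim (simp add: transport_def)

end

theorem mainTheorem7:
  fixes X Y :: "'a::euclidean_space set" and c :: "'a \<Rightarrow> 'a \<Rightarrow> real"
    and x0 y0 :: 'a and \<mu> :: "'a measure" and \<phi> :: "'a \<Rightarrow> real"
  assumes "cost_assms X Y c x0 y0"
    and "\<mu> \<in> Pcost_AC_X X c y0"
    and "continuous_on Y \<phi>" and "bounded (\<phi> ` Y)"
  shows "((INF \<nu>\<in>Pcost_Y Y c x0. ereal (LINT y:Y|\<nu>. \<phi> y) + enn2ereal (Kc X Y c \<mu> \<nu>))
           = ereal (LINT x:X|\<mu>. ctrans_Y Y c (\<lambda>y. - \<phi> y) x)) \<and>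
         (AE x in \<mu>. ctrans_Y Y c (\<lambda>y. - \<phi> y) differentiable (at x)) \<and>
         (\<exists>T. T \<in> borel_measurable \<mu> \<and>
              (AE x in \<mu>. T x = Tmap Y c (ctrans_Y Y c (\<lambda>y. - \<phi> y)) x) \<and>
              distr \<mu> borel T \<in> Pcost_Y Y c x0 \<and>
              ereal (LINT y:Y|distr \<mu> borel T. \<phi> y) + enn2ereal (Kc X Y c \<mu> (distr \<mu> borel T))
                = ereal (LINT x:X|\<mu>. ctrans_Y Y c (\<lambda>y. - \<phi> y) x))"
proof -
  obtain M where "\<And>y. y \<in> Y \<Longrightarrow> \<bar>\<phi> y\<bar> \<le> M"
    using assms(4) unfolding bounded_iff by auto
  then interpret ot_setting X Y c x0 y0 \<phi> M \<mu>
    by unfold_locales (use assms in auto)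
  show ?thesis
    using INF_dual_eq_ctrans_integral AE_ctrans_differentiable AE_transport_eq_Tmap
      measurable_transport_mu transported_Pcost transported_attains
    unfolding transported_def by (intro conjI exI[of _ transport]) auto
qed

end
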